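(* Let $(T,H)$ be a CFTP time with ambiguities and let $T^*$ be constructed from it. If $\mathbb P(T^*>-\infty)=1$, then $T^*$ is a CFTP time.
   Context: Setting. Fix $d\ge1$ and a finite set $S$. A transition rule is $(f,A,r)$, $A\subset\mathbb Z^d$ finite, $f:S^A\to S$ ($f$ constant if $A=\emptyset$), $r\ge0$; $\mathfrak R^x\eta$ equals $\eta$ off $x$ and $(\mathfrak R^x\eta)(x)=f((\eta(x+y))_{y\in A})$. A dynamics with rules $(f_i,A_i,r_i)_{i\in I}$ ($I$ finite) is realized by a Poisson process $\mathcal P$ on $\mathbb Z^d\times I\times\mathbb R$ of intensity $dJ(x,i,t)=r_i\,d(c_{\mathbb Z^d}\otimes c_I\otimes\mathrm{Leb})$ on the canonical space $\Omega$ of locally finite $\omega$ with (i) distinct time coordinates, (ii) infinitely many points on each $\{(x,i)\}\times\mathbb R_\pm$, (iii) every chain of points $(y_n,j_n,s_n)\in\omega$ with $y_{n+1}\in y_n+A_{j_n}$, $s_{n+1}<s_n$ has $s_n\to-\infty$. $\Phi_{t_1}^{t_2}(\xi)$: start from $\xi$ just before $t_1$, apply in time order $\mathfrak R_i^x$ for $(x,i,t)\in\mathcal P$, $t_1\le t\le t_2$; $\Phi_t^{0-}$ uses times in $[t,0)$. $\mathcal P_t:=\mathcal P\cap(\mathbb Z^d\times I\times[t,0))$, $\mathcal F_t:=\sigma(\mathcal P_t)$; shifts $\tau_{x,t}(\omega)=\{(z-x,i,s-t):(z,i,s)\in\omega\}$, $U\circ\tau_{x,t}$ = $U$ evaluated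 at the shifted configuration. A CFTP time is an a.s. finite random $T\in[-\infty,0)$ with $[\Phi_T^{0-}(\xi_1)](0)=[\Phi_T^{0-}(\xi_2)](0)$ for all $\xi_1,\xi_2$ on $\{T>-\infty\}$. With $e(\alpha,s,\xi):=[\Phi_s^t(\xi)](x)$ for $\alpha=(x,i,t)\in\mathcal P$, $s\le t$, a CFTP time with ambiguities is a pair $(T,H)$, $T\in[-\infty,0)$ a.s. finite, $H\subset\mathcal P_T$ random, finite on $\{T>-\infty\}$, $H\cap\mathcal P_t$ $\mathcal F_t$-measurable for all $t<0$, and on $\{T>-\infty\}$, $e(\alpha,T,\xi_1)=e(\alpha,T,\xi_2)$ for all $\alpha\in H$ implies $[\Phi_T^{0-}(\xi_1)](0)=[\Phi_T^{0-}(\xi_2)](0)$. Construction of $T^*$: $\mathrm{Amb}_0:=\{(0,0)\}$, $\mathrm{Amb}_{n+1}:=\bigcup_{(x,t)\in\mathrm{Amb}_n}\bigcup_{(z,i,s)\in H_{x,t}}\bigcup_{y\in A_i}\{(z+y,s)\}$ with $H_{x,t}:=\{(w+x,i,u+t):(w,i,u)\in H(\tau_{x,t}\omega)\}$, $\mathrm{Amb}_\infty:=\bigcup_n\mathrm{Amb}_n$, $T^*:=\inf_{(x,t)\in\mathrm{Amb}_\infty}(t+T\circ\tau_{x,t})$ if $\mathrm{Amb}_\infty$ is finite, $T^*:=-\infty$ otherwise. *)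

theory Defs
  imports "HOL-Probability.Probability"
begin

text \<open>Points of the Poisson process: (site, rule index, time).\<close>
type_synonym ('d, 'i) pt = "(int ^ 'd) \<times> 'i \<times> real"

definition time :: "('d::finite, 'i) pt \<Rightarrow> real" where
  "time p = snd (snd p)"

definition pts_closed :: "('d::finite, 'i) pt set \<Rightarrow> int ^ 'd \<Rightarrow> real \<Rightarrow> real \<Rightarrow> real set" where
  "pts_closed \<omega> z a b = {t. \<exists>i. (z, i, t) \<in> \<omega> \<and> a \<le> t \<and> t \<le> b}"

definition pts_open :: "('d::finite, 'i) pt set \<Rightarrow> int ^ 'd \<Rightarrow> real \<Rightarrow> real \<Rightarrow> real set" where
  "pts_open \<omega> z a b = {t. \<exists>i. (z, i, t) \<in> \<omega> \<and> a \<le> t \<and> t < b}"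

text \<open>Given V z u = state at site z right after all points with time in [s,u],
  the state at site w just before time t.\<close>
definition before_val :: "('d::finite, 'i) pt set \<Rightarrow> real \<Rightarrow> (int ^ 'd \<Rightarrow> 's)
    \<Rightarrow> (int ^ 'd \<Rightarrow> real \<Rightarrow> 's) \<Rightarrow> int ^ 'd \<Rightarrow> real \<Rightarrow> 's" where
  "before_val \<omega> s \<xi> V w t =
     (if pts_open \<omega> w s t = {} then \<xi> w else V w (Max (pts_open \<omega> w s t)))"

text \<open>Evolution equation: starting from \<xi> just before s, apply the rules of the points
  of \<omega> with time \<ge> s in time order. The rule (f i, A i) at site z reads the values
  (\<eta>(z+y))_{y \<in> A i} just before the point's time.\<close>
definition evol_eqn :: "('i \<Rightarrow> (int ^ 'd::finite) set) \<Rightarrow> ('i \<Rightarrow> (int ^ 'd \<Rightarrow> 's) \<Rightarrow> 's)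
    \<Rightarrow> ('d, 'i) pt set \<Rightarrow> real \<Rightarrow> (int ^ 'd \<Rightarrow> 's) \<Rightarrow> (int ^ 'd \<Rightarrow> real \<Rightarrow> 's) \<Rightarrow> bool" where
  "evol_eqn A f \<omega> s \<xi> V \<longleftrightarrow>
     (\<forall>z u. V z u =
        (if pts_closed \<omega> z s u = {} then \<xi> z
         else (let t = Max (pts_closed \<omega> z s u); i = (THE i. (z, i, t) \<in> \<omega>)
               in f i (\<lambda>y\<in>A i. before_val \<omega> s \<xi> V (z + y) t))))"

definition evol :: "('i \<Rightarrow> (int ^ 'd::finite) set) \<Rightarrow> ('i \<Rightarrow> (int ^ 'd \<Rightarrow> 's) \<Rightarrow> 's)
    \<Rightarrow> ('d, 'i) pt set \<Rightarrow> real \<Rightarrow> (int ^ 'd \<Rightarrow> 's) \<Rightarrow> int ^ 'd \<Rightarrow> real \<Rightarrow> 's" where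
  "evol A f \<omega> s \<xi> = (THE V. evol_eqn A f \<omega> s \<xi> V)"

definition Phi :: "('i \<Rightarrow> (int ^ 'd::finite) set) \<Rightarrow> ('i \<Rightarrow> (int ^ 'd \<Rightarrow> 's) \<Rightarrow> 's)
    \<Rightarrow> ('d, 'i) pt set \<Rightarrow> real \<Rightarrow> real \<Rightarrow> (int ^ 'd \<Rightarrow> 's) \<Rightarrow> int ^ 'd \<Rightarrow> 's" where
  "Phi A f \<omega> t1 t2 \<xi> = (\<lambda>z. evol A f \<omega> t1 \<xi> z t2)"

text \<open>Phi_before A f \<omega> t1 t2 \<xi> = \<Phi>_{t1}^{t2-}(\<xi>) (times in [t1,t2)).\<close>
definition Phi_before :: "('i \<Rightarrow> (int ^ 'd::finite) set) \<Rightarrow> ('i \<Rightarrow> (int ^ 'd \<Rightarrow> 's) \<Rightarrow> 's)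
    \<Rightarrow> ('d, 'i) pt set \<Rightarrow> real \<Rightarrow> real \<Rightarrow> (int ^ 'd \<Rightarrow> 's) \<Rightarrow> int ^ 'd \<Rightarrow> 's" where
  "Phi_before A f \<omega> t1 t2 \<xi> = (\<lambda>z. before_val \<omega> t1 \<xi> (evol A f \<omega> t1 \<xi>) z t2)"

definition e_val :: "('i \<Rightarrow> (int ^ 'd::finite) set) \<Rightarrow> ('i \<Rightarrow> (int ^ 'd \<Rightarrow> 's) \<Rightarrow> 's)
    \<Rightarrow> ('d, 'i) pt set \<Rightarrow> ('d, 'i) pt \<Rightarrow> real \<Rightarrow> (int ^ 'd \<Rightarrow> 's) \<Rightarrow> 's" where
  "e_val A f \<omega> \<alpha> s \<xi> = (case \<alpha> of (x, i, t) \<Rightarrow> Phi A f \<omega> s t \<xi> x)"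

definition canonical_space :: "('i \<Rightarrow> (int ^ 'd::finite) set) \<Rightarrow> ('d, 'i) pt set set" where
  "canonical_space A = {\<omega>.
     (\<forall>z i a b. finite {t. (z, i, t) \<in> \<omega> \<and> a \<le> t \<and> t \<le> b}) \<and>
     (\<forall>p\<in>\<omega>. \<forall>q\<in>\<omega>. time p = time q \<longrightarrow> p = q) \<and>
     (\<forall>z i. infinite {t. (z, i, t) \<in> \<omega> \<and> t > 0} \<and> infinite {t. (z, i, t) \<in> \<omega> \<and> t < 0}) \<and>
     (\<forall>(y :: nat \<Rightarrow> int ^ 'd) (j :: nat \<Rightarrow> 'i) (s :: nat \<Rightarrow> real).
        (\<forall>n. (y n, j n, s n) \<in> \<omega> \<and> y (Suc n) - y n \<in> A (j n) \<and> s (Suc n) < s n)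
        \<longrightarrow> filterlim s at_bot sequentially)}"

definition shift :: "int ^ 'd::finite \<Rightarrow> real \<Rightarrow> ('d, 'i) pt set \<Rightarrow> ('d, 'i) pt set" where
  "shift x t \<omega> = (\<lambda>(z, i, s). (z - x, i, s - t)) ` \<omega>"

definition Pt :: "('d::finite, 'i) pt set \<Rightarrow> ereal \<Rightarrow> ('d, 'i) pt set" where
  "Pt \<omega> T = {p \<in> \<omega>. T \<le> ereal (time p) \<and> time p < 0}"

definition box :: "int ^ 'd::finite \<Rightarrow> 'i \<Rightarrow> real set \<Rightarrow> ('d, 'i) pt set" where
  "box x i U = {x} \<times> {i} \<times> U"

definition count_gen :: "('d::finite, 'i) pt set set \<Rightarrow> real set set \<Rightarrow> ('d, 'i) pt set set set" where
  "count_gen \<Omega> Us = {{\<omega> \<in> \<Omega>. card (\<omega> \<inter> box x i U) = k} | x i U k. U \<in> Us}"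

definition F_sigma :: "('d::finite, 'i) pt set set \<Rightarrow> real \<Rightarrow> ('d, 'i) pt set measure" where
  "F_sigma \<Omega> t = sigma \<Omega> (count_gen \<Omega> {U. U \<in> sets borel \<and> U \<subseteq> {t..<0}})"

text \<open>M is the law of the Poisson process with intensity r_i d(counting \<otimes> counting \<otimes> Leb),
  realized on the canonical space.\<close>
definition poisson_process :: "('i \<Rightarrow> (int ^ 'd::finite) set) \<Rightarrow> ('i \<Rightarrow> real)
    \<Rightarrow> ('d, 'i) pt set measure \<Rightarrow> bool" where
  "poisson_process A r M \<longleftrightarrow>
     prob_space M \<and> space M = canonical_space A \<and>
     sets M = sigma_sets (canonical_space A)
                (count_gen (canonical_space A) {U. U \<in> sets borel \<and> bounded U}) \<and>
     (\<forall>(K :: nat set) (X :: nat \<Rightarrow> int ^ 'd) (J :: nat \<Rightarrow> 'i) (U :: nat \<Rightarrow> real set).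
        finite K \<longrightarrow> (\<forall>k\<in>K. U k \<in> sets borel \<and> bounded (U k)) \<longrightarrow>
        disjoint_family_on (\<lambda>k. box (X k) (J k) (U k)) K \<longrightarrow>
          prob_space.indep_vars M (\<lambda>_. count_space UNIV)
             (\<lambda>k \<omega>. card (\<omega> \<inter> box (X k) (J k) (U k))) K \<and>
          (\<forall>k\<in>K. \<forall>n::nat.
             measure M {\<omega> \<in> space M. card (\<omega> \<inter> box (X k) (J k) (U k)) = n}
             = exp (- (r (J k) * measure lborel (U k))) * (r (J k) * measure lborel (U k)) ^ n
               / fact n))"

definition cftp_time :: "('i \<Rightarrow> (int ^ 'd::finite) set) \<Rightarrow> ('i \<Rightarrow> (int ^ 'd \<Rightarrow> 's) \<Rightarrow> 's)
    \<Rightarrow> ('d, 'i) pt set measure \<Rightarrow> (('d, 'i) pt set \<Rightarrow> ereal) \<Rightarrow> bool" where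
  "cftp_time A f M T \<longleftrightarrow>
     T \<in> borel_measurable M \<and> (\<forall>\<omega>\<in>space M. T \<omega> < 0) \<and>
     (AE \<omega> in M. T \<omega> \<noteq> - \<infinity>) \<and>
     (\<forall>\<omega>\<in>space M. T \<omega> \<noteq> - \<infinity> \<longrightarrow>
        (\<forall>\<xi>1 \<xi>2. Phi_before A f \<omega> (real_of_ereal (T \<omega>)) 0 \<xi>1 0
                 = Phi_before A f \<omega> (real_of_ereal (T \<omega>)) 0 \<xi>2 0))"

definition cftp_amb :: "('i \<Rightarrow> (int ^ 'd::finite) set) \<Rightarrow> ('i \<Rightarrow> (int ^ 'd \<Rightarrow> 's) \<Rightarrow> 's)
    \<Rightarrow> ('d, 'i) pt set measure \<Rightarrow> (('d, 'i) pt set \<Rightarrow> ereal)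
    \<Rightarrow> (('d, 'i) pt set \<Rightarrow> ('d, 'i) pt set) \<Rightarrow> bool" where
  "cftp_amb A f M T H \<longleftrightarrow>
     T \<in> borel_measurable M \<and> (\<forall>\<omega>\<in>space M. T \<omega> < 0) \<and>
     (AE \<omega> in M. T \<omega> \<noteq> - \<infinity>) \<and>
     (\<forall>\<omega>\<in>space M. H \<omega> \<subseteq> Pt \<omega> (T \<omega>)) \<and>
     (\<forall>\<omega>\<in>space M. T \<omega> \<noteq> - \<infinity> \<longrightarrow> finite (H \<omega>)) \<and>
     (\<forall>t::real. t < 0 \<longrightarrow> (\<forall>x i U k. U \<in> sets borel \<longrightarrow> U \<subseteq> {t..<0} \<longrightarrow>
        {\<omega> \<in> space M. card (H \<omega> \<inter> Pt \<omega> (ereal t) \<inter> box x i U) = k}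
          \<in> sets (F_sigma (space M) t))) \<and>
     (\<forall>\<omega>\<in>space M. T \<omega> \<noteq> - \<infinity> \<longrightarrow>
        (\<forall>\<xi>1 \<xi>2. (\<forall>\<alpha>\<in>H \<omega>. e_val A f \<omega> \<alpha> (real_of_ereal (T \<omega>)) \<xi>1
                              = e_val A f \<omega> \<alpha> (real_of_ereal (T \<omega>)) \<xi>2)
           \<longrightarrow> Phi_before A f \<omega> (real_of_ereal (T \<omega>)) 0 \<xi>1 0
               = Phi_before A f \<omega> (real_of_ereal (T \<omega>)) 0 \<xi>2 0))"

definition H_shift :: "(('d::finite, 'i) pt set \<Rightarrow> ('d, 'i) pt set) \<Rightarrow> ('d, 'i) pt set
    \<Rightarrow> int ^ 'd \<Rightarrow> real \<Rightarrow> ('d, 'i) pt set" where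
  "H_shift H \<omega> x t = (\<lambda>(w, i, u). (w + x, i, u + t)) ` H (shift x t \<omega>)"

fun Amb :: "('i \<Rightarrow> (int ^ 'd::finite) set) \<Rightarrow> (('d, 'i) pt set \<Rightarrow> ('d, 'i) pt set)
    \<Rightarrow> ('d, 'i) pt set \<Rightarrow> nat \<Rightarrow> ((int ^ 'd) \<times> real) set" where
  "Amb A H \<omega> 0 = {(0, 0)}"
| "Amb A H \<omega> (Suc n) =
     (\<Union>(x, t)\<in>Amb A H \<omega> n. \<Union>(z, i, s)\<in>H_shift H \<omega> x t. (\<lambda>y. (z + y, s)) ` A i)"

definition Amb_inf :: "('i \<Rightarrow> (int ^ 'd::finite) set) \<Rightarrow> (('d, 'i) pt set \<Rightarrow> ('d, 'i) pt set)
    \<Rightarrow> ('d, 'i) pt set \<Rightarrow> ((int ^ 'd) \<times> real) set" where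
  "Amb_inf A H \<omega> = (\<Union>n. Amb A H \<omega> n)"

definition Tstar :: "('i \<Rightarrow> (int ^ 'd::finite) set) \<Rightarrow> (('d, 'i) pt set \<Rightarrow> ereal)
    \<Rightarrow> (('d, 'i) pt set \<Rightarrow> ('d, 'i) pt set) \<Rightarrow> ('d, 'i) pt set \<Rightarrow> ereal" where
  "Tstar A T H \<omega> =
     (if finite (Amb_inf A H \<omega>)
      then (INF (x, t)\<in>Amb_inf A H \<omega>. ereal t + T (shift x t \<omega>))
      else - \<infinity>)"

end

theory Submission
  imports Defs
begin

(*
  Coalescence is pathwise.  Write S = T*(omega).  Every ambiguity (x, t) satisfies
  S <= t + T(tau_{x,t} omega).  Restarting the dynamics at that time and translating by
  (x, t), the defining property of (T, H) says that the state at site x just before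
  time t is the same for two initial conditions once the states at the points of
  H_{x,t} agree; these points generate further ambiguities at strictly earlier times.
  As Amb_inf is finite, induction over time gives agreement at the origin (0, 0-).

  Measurability: {T* > -oo} has probability one, hence is an event; on it T* is an
  infimum over the ambiguities, which becomes an infimum over a countable family once
  ambiguity times are indexed by "slots" (rational time windows containing exactly one
  point of the process).  This uses measurability of the shift, of H and of Amb.
*)

section \<open>The canonical space\<close>

lemma canonical_space_locally_finite:
  "\<omega> \<in> canonical_space A \<Longrightarrow> finite {t. (z, i, t) \<in> \<omega> \<and> a \<le> t \<and> t \<le> b}"
  unfolding canonical_space_def by blast

lemma canonical_space_distinct_times:
  "\<omega> \<in> canonical_space A \<Longrightarrow> p \<in> \<omega> \<Longrightarrow> q \<in> \<omega> \<Longrightarrow> time p = time q \<Longrightarrow> p = q"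
  unfolding canonical_space_def by blast

lemma canonical_space_chain:
  "\<omega> \<in> canonical_space A \<Longrightarrow> (\<And>n. (y n, j n, s n) \<in> \<omega>) \<Longrightarrow>
   (\<And>n. y (Suc n) - y n \<in> A (j n)) \<Longrightarrow> (\<And>n. s (Suc n) < s n) \<Longrightarrow>
   filterlim s at_bot sequentially"
  unfolding canonical_space_def by blast

text \<open>Since times are distinct, the rule used at a point is determined by site and time.\<close>
lemma rule_at_point:
  assumes "\<omega> \<in> canonical_space A" and "(z, i, t) \<in> \<omega>"
  shows "(THE i. (z, i, t) \<in> \<omega>) = i"
proof (rule the_equality)
  fix i' assume "(z, i', t) \<in> \<omega>"
  then show "i' = i"
    using canonical_space_distinct_times[OF assms(1) _ assms(2)] by (auto simp: time_def)
qed (rule assms(2))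

lemma pts_closed_iff: "t \<in> pts_closed \<omega> z a b \<longleftrightarrow> (\<exists>i. (z, i, t) \<in> \<omega>) \<and> a \<le> t \<and> t \<le> b"
  unfolding pts_closed_def by auto

lemma pts_open_iff: "t \<in> pts_open \<omega> z a b \<longleftrightarrow> (\<exists>i. (z, i, t) \<in> \<omega>) \<and> a \<le> t \<and> t < b"
  unfolding pts_open_def by auto

lemma pts_closed_finite:
  assumes "\<omega> \<in> canonical_space (A :: 'i::finite \<Rightarrow> _)"
  shows "finite (pts_closed \<omega> z a b)"
proof -
  have "pts_closed \<omega> z a b = (\<Union>i. {t. (z, i, t) \<in> \<omega> \<and> a \<le> t \<and> t \<le> b})"
    unfolding pts_closed_def by auto
  then show ?thesis using canonical_space_locally_finite[OF assms] by simp
qed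

lemma pts_open_finite:
  assumes "\<omega> \<in> canonical_space (A :: 'i::finite \<Rightarrow> _)"
  shows "finite (pts_open \<omega> z a b)"
  by (rule finite_subset[OF _ pts_closed_finite[OF assms, of z a b]])
    (auto simp: pts_open_iff pts_closed_iff)

lemma Max_pts_closed_in:
  assumes "\<omega> \<in> canonical_space (A :: 'i::finite \<Rightarrow> _)" "pts_closed \<omega> z a b \<noteq> {}"
  shows "Max (pts_closed \<omega> z a b) \<in> pts_closed \<omega> z a b"
  using pts_closed_finite[OF assms(1)] assms(2) by (rule Max_in)

lemma Max_pts_open_in:
  assumes "\<omega> \<in> canonical_space (A :: 'i::finite \<Rightarrow> _)" "pts_open \<omega> z a b \<noteq> {}"
  shows "Max (pts_open \<omega> z a b) \<in> pts_open \<omega> z a b"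
  using pts_open_finite[OF assms(1)] assms(2) by (rule Max_in)

section \<open>Well-posedness of the evolution equation\<close>

text \<open>The value of the evolution at site \<open>z\<close> after time \<open>u\<close> is computed from the values
  at the neighbouring sites just before the last update time at \<open>z\<close>.  The relation
  \<open>dep_rel\<close> links a space-time point to the points its value depends on.\<close>
definition dep_rel :: "('i \<Rightarrow> (int ^ 'd::finite) set) \<Rightarrow> ('d, 'i) pt set \<Rightarrow> real
    \<Rightarrow> (((int ^ 'd) \<times> real) \<times> ((int ^ 'd) \<times> real)) set" where
  "dep_rel A \<omega> s = {((w, t'), (z, u)). pts_closed \<omega> z s u \<noteq> {} \<and>
      (\<exists>i y. (z, i, Max (pts_closed \<omega> z s u)) \<in> \<omega> \<and> y \<in> A i \<and> w = z + y \<and>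
         pts_open \<omega> w s (Max (pts_closed \<omega> z s u)) \<noteq> {} \<and>
         t' = Max (pts_open \<omega> w s (Max (pts_closed \<omega> z s u))))}"

text \<open>Condition (iii) of the canonical space makes the dependency relation well-founded:
  an infinite descending chain would be a chain of points with times bounded below by \<open>s\<close>.\<close>
lemma wf_dep_rel:
  assumes om: "\<omega> \<in> canonical_space (A :: 'i::finite \<Rightarrow> _)"
  shows "wf (dep_rel A \<omega> s)"
proof (rule ccontr)
  assume "\<not> wf (dep_rel A \<omega> s)"
  then obtain g where g: "\<And>n. (g (Suc n), g n) \<in> dep_rel A \<omega> s"
    unfolding wf_iff_no_infinite_down_chain by blast
  define z where "z n = fst (g n)" for n
  define u where "u n = snd (g n)" for n
  define t where "t n = Max (pts_closed \<omega> (z n) s (u n))" for n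
  have step: "pts_closed \<omega> (z n) s (u n) \<noteq> {} \<and> (\<exists>i y. (z n, i, t n) \<in> \<omega> \<and> y \<in> A i \<and>
      z (Suc n) = z n + y \<and> pts_open \<omega> (z (Suc n)) s (t n) \<noteq> {} \<and>
      u (Suc n) = Max (pts_open \<omega> (z (Suc n)) s (t n)))" for n
    using g[of n] unfolding dep_rel_def z_def u_def t_def by (simp add: case_prod_beta)
  then obtain I where I: "\<And>n. (z n, I n, t n) \<in> \<omega> \<and> z (Suc n) - z n \<in> A (I n)"
    by (metis add_diff_cancel_left')
  have t_bounds: "s \<le> t n \<and> t n \<le> u n" for n
    using Max_pts_closed_in[OF om] step[of n] unfolding t_def pts_closed_iff by blast
  have u_less: "u (Suc n) < t n" for n
    using step[of n] Max_pts_open_in[OF om] unfolding pts_open_iff by metis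
  have dec: "t (Suc n) < t n" for n using t_bounds[of "Suc n"] u_less[of n] by linarith
  have "filterlim t at_bot sequentially"
    by (rule canonical_space_chain[OF om, of z I t]) (use I dec in auto)
  then obtain n where "t n \<le> s - 1"
    unfolding filterlim_at_bot eventually_sequentially by blast
  with t_bounds[of n] show False by linarith
qed

definition evol_step :: "('i \<Rightarrow> (int ^ 'd::finite) set) \<Rightarrow> ('i \<Rightarrow> (int ^ 'd \<Rightarrow> 's) \<Rightarrow> 's)
    \<Rightarrow> ('d, 'i) pt set \<Rightarrow> real \<Rightarrow> (int ^ 'd \<Rightarrow> 's) \<Rightarrow> ((int ^ 'd) \<times> real \<Rightarrow> 's)
    \<Rightarrow> (int ^ 'd) \<times> real \<Rightarrow> 's" where
  "evol_step A f \<omega> s \<xi> W = (\<lambda>(z, u).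
     if pts_closed \<omega> z s u = {} then \<xi> z
     else (let t = Max (pts_closed \<omega> z s u); i = (THE i. (z, i, t) \<in> \<omega>)
           in f i (\<lambda>y\<in>A i. before_val \<omega> s \<xi> (curry W) (z + y) t)))"

lemma evol_eqn_iff_fixpoint:
  "evol_eqn A f \<omega> s \<xi> V \<longleftrightarrow> case_prod V = evol_step A f \<omega> s \<xi> (case_prod V)"
  unfolding evol_eqn_def evol_step_def fun_eq_iff by auto

lemma adm_wf_evol_step:
  fixes A :: "'i::finite \<Rightarrow> (int ^ 'd::finite) set" and f :: "'i \<Rightarrow> (int ^ 'd \<Rightarrow> 's) \<Rightarrow> 's"
  assumes om: "\<omega> \<in> canonical_space A"
  shows "adm_wf (dep_rel A \<omega> s) (evol_step A f \<omega> s \<xi>)"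
  unfolding adm_wf_def
proof (intro allI impI)
  fix W1 W2 :: "(int ^ 'd) \<times> real \<Rightarrow> 's" and p
  assume agree: "\<forall>q. (q, p) \<in> dep_rel A \<omega> s \<longrightarrow> W1 q = W2 q"
  obtain z u where p: "p = (z, u)" by (cases p)
  show "evol_step A f \<omega> s \<xi> W1 p = evol_step A f \<omega> s \<xi> W2 p"
  proof (cases "pts_closed \<omega> z s u = {}")
    case False
    define t where "t = Max (pts_closed \<omega> z s u)"
    obtain i where i: "(z, i, t) \<in> \<omega>"
      using Max_pts_closed_in[OF om False] unfolding t_def pts_closed_iff by blast
    have "before_val \<omega> s \<xi> (curry W1) (z + y) t = before_val \<omega> s \<xi> (curry W2) (z + y) t"
      if "y \<in> A i" for y
      using agree[rule_format, of "(z + y, Max (pts_open \<omega> (z + y) s t))"] False i that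
      unfolding before_val_def dep_rel_def p t_def by auto
    then have "(\<lambda>y\<in>A i. before_val \<omega> s \<xi> (curry W1) (z + y) t)
             = (\<lambda>y\<in>A i. before_val \<omega> s \<xi> (curry W2) (z + y) t)"
      by (rule restrict_ext)
    then show ?thesis
      using rule_at_point[OF om i] by (simp add: evol_step_def p t_def[symmetric] Let_def)
  qed (simp add: evol_step_def p)
qed

lemma adm_wf_fixpoint_unique:
  assumes "wf R" "adm_wf R F" "g = F g" "h = F h"
  shows "g = h"
proof
  fix x
  show "g x = h x"
    using assms(1)
  proof (induction x rule: wf_induct_rule)
    case (less x)
    then have "F g x = F h x" using assms(2) unfolding adm_wf_def by blast
    then show ?case using assms(3,4) by metis
  qed
qed

text \<open>The evolution equation has exactly one solution, obtained by well-founded recursion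
  along the dependencies; hence \<open>evol\<close> (a definite description) is that solution.\<close>
lemma evol_eqn_unique_solution:
  assumes "\<omega> \<in> canonical_space (A :: 'i::finite \<Rightarrow> _)"
  shows "\<exists>!V. evol_eqn A f \<omega> s \<xi> V"
proof -
  note wf = wf_dep_rel[OF assms] and adm = adm_wf_evol_step[OF assms]
  let ?W = "wfrec (dep_rel A \<omega> s) (evol_step A f \<omega> s \<xi>)"
  have "evol_eqn A f \<omega> s \<xi> (curry ?W)"
    unfolding evol_eqn_iff_fixpoint using wfrec_fixpoint[OF wf adm] by simp
  moreover have "V1 = V2" if "evol_eqn A f \<omega> s \<xi> V1" "evol_eqn A f \<omega> s \<xi> V2" for V1 V2
    using adm_wf_fixpoint_unique[OF wf adm] that unfolding evol_eqn_iff_fixpoint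
    by (metis curry_case_prod)
  ultimately show ?thesis by blast
qed

lemma evol_eqn_evol:
  "\<omega> \<in> canonical_space (A :: 'i::finite \<Rightarrow> _) \<Longrightarrow> evol_eqn A f \<omega> s \<xi> (evol A f \<omega> s \<xi>)"
  unfolding evol_def by (rule theI'[OF evol_eqn_unique_solution])

lemma evol_eqI:
  "\<omega> \<in> canonical_space (A :: 'i::finite \<Rightarrow> _) \<Longrightarrow> evol_eqn A f \<omega> s \<xi> V \<Longrightarrow> evol A f \<omega> s \<xi> = V"
  unfolding evol_def by (rule the1_equality[OF evol_eqn_unique_solution])

lemma evol_unfold:
  assumes "\<omega> \<in> canonical_space (A :: 'i::finite \<Rightarrow> _)"
  shows "evol A f \<omega> s \<xi> z u =
        (if pts_closed \<omega> z s u = {} then \<xi> z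
         else (let t = Max (pts_closed \<omega> z s u); i = (THE i. (z, i, t) \<in> \<omega>)
               in f i (\<lambda>y\<in>A i. before_val \<omega> s \<xi> (evol A f \<omega> s \<xi>) (z + y) t)))"
  using evol_eqn_evol[OF assms, of f s \<xi>] unfolding evol_eqn_def by blast

lemma evol_at_point:
  assumes om: "\<omega> \<in> canonical_space (A :: 'i::finite \<Rightarrow> _)" and p: "(x, i, t) \<in> \<omega>" and "s \<le> t"
  shows "evol A f \<omega> s \<xi> x t = f i (\<lambda>y\<in>A i. before_val \<omega> s \<xi> (evol A f \<omega> s \<xi>) (x + y) t)"
proof -
  have t: "t \<in> pts_closed \<omega> x s t" using p \<open>s \<le> t\<close> by (auto simp: pts_closed_iff)
  have "Max (pts_closed \<omega> x s t) = t"
    by (rule Max_eqI[OF pts_closed_finite[OF om] _ t]) (auto simp: pts_closed_iff)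
  then show ?thesis
    using t rule_at_point[OF om p] by (auto simp: evol_unfold[OF om] Let_def)
qed

text \<open>Restarting at a later time \<open>s'\<close>: the restriction of the point sets to times \<open>\<ge> s'\<close>
  does not change their maxima, provided such times exist.\<close>
lemma Max_upper_part:
  fixes S :: "real set"
  assumes "finite S" "m \<in> S" "c \<le> m"
  shows "Max {q \<in> S. c \<le> q} = Max S"
proof (rule Max_eqI)
  show "Max S \<in> {q \<in> S. c \<le> q}"
    using Max_in[OF assms(1)] Max_ge[OF assms(1,2)] assms(2,3) by auto
qed (use assms(1) in auto)

lemma pts_closed_restrict:
  "s \<le> s' \<Longrightarrow> pts_closed \<omega> z s' u = {q \<in> pts_closed \<omega> z s u. s' \<le> q}"
  by (auto simp: pts_closed_iff)

lemma pts_open_restrict: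
  "s \<le> s' \<Longrightarrow> pts_open \<omega> z s' u = {q \<in> pts_open \<omega> z s u. s' \<le> q}"
  by (auto simp: pts_open_iff)

text \<open>The configuration \<open>W\<close> below is the evolution from \<open>s\<close> seen as an evolution started at
  \<open>s'\<close> from the configuration just before \<open>s'\<close>; both read the same values after \<open>s'\<close>.\<close>
lemma before_val_restart:
  assumes om: "\<omega> \<in> canonical_space (A :: 'i::finite \<Rightarrow> _)" and "s \<le> s'" "s' \<le> t"
    and \<eta>: "\<eta> = (\<lambda>z. before_val \<omega> s \<xi> V z s')"
    and W: "W = (\<lambda>z u. if pts_closed \<omega> z s' u = {} then \<eta> z else V z u)"
  shows "before_val \<omega> s \<xi> V w t = before_val \<omega> s' \<eta> W w t"
proof (cases "pts_open \<omega> w s' t = {}")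
  case True
  then have "pts_open \<omega> w s t = pts_open \<omega> w s s'"
    using \<open>s' \<le> t\<close> by (auto simp: pts_open_iff set_eq_iff) (meson not_le)
  then show ?thesis using True by (simp add: before_val_def \<eta>)
next
  case False
  define m where "m = Max (pts_open \<omega> w s' t)"
  have m: "m \<in> pts_open \<omega> w s' t" unfolding m_def by (rule Max_pts_open_in[OF om False])
  then have m': "m \<in> pts_open \<omega> w s t" "s' \<le> m" using \<open>s \<le> s'\<close> by (auto simp: pts_open_iff)
  have "Max (pts_open \<omega> w s t) = m"
    unfolding m_def pts_open_restrict[OF \<open>s \<le> s'\<close>]
    by (rule Max_upper_part[OF pts_open_finite[OF om] m', symmetric])
  moreover have "m \<in> pts_closed \<omega> w s' m" using m by (auto simp: pts_open_iff pts_closed_iff)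
  ultimately show ?thesis using False m'(1) by (auto simp: before_val_def W m_def[symmetric])
qed

text \<open>Flow property \<open>\<Phi>_s^t = \<Phi>_{s'}^t \<circ> \<Phi>_s^{s'-}\<close>: the evolution from \<open>s\<close>, observed after
  \<open>s'\<close>, is the evolution restarted at \<open>s'\<close> from the state just before \<open>s'\<close>.\<close>
lemma evol_restart:
  assumes om: "\<omega> \<in> canonical_space (A :: 'i::finite \<Rightarrow> _)" and ss: "s \<le> s'" and ts: "s' \<le> t"
  shows "before_val \<omega> s \<xi> (evol A f \<omega> s \<xi>) w t =
         before_val \<omega> s' (\<lambda>z. before_val \<omega> s \<xi> (evol A f \<omega> s \<xi>) z s')
            (evol A f \<omega> s' (\<lambda>z. before_val \<omega> s \<xi> (evol A f \<omega> s \<xi>) z s')) w t"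
proof -
  define V where "V = evol A f \<omega> s \<xi>"
  define \<eta> where "\<eta> = (\<lambda>z. before_val \<omega> s \<xi> V z s')"
  define W where "W = (\<lambda>z u. if pts_closed \<omega> z s' u = {} then \<eta> z else V z u)"
  have bv: "before_val \<omega> s \<xi> V w' t' = before_val \<omega> s' \<eta> W w' t'" if "s' \<le> t'" for w' t'
    by (rule before_val_restart[OF om ss that \<eta>_def W_def])
  have "evol_eqn A f \<omega> s' \<eta> W"
    unfolding evol_eqn_def
  proof (intro allI)
    fix z u
    show "W z u = (if pts_closed \<omega> z s' u = {} then \<eta> z
         else (let t = Max (pts_closed \<omega> z s' u); i = (THE i. (z, i, t) \<in> \<omega>)
               in f i (\<lambda>y\<in>A i. before_val \<omega> s' \<eta> W (z + y) t)))"
    proof (cases "pts_closed \<omega> z s' u = {}")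
      case False
      define m where "m = Max (pts_closed \<omega> z s' u)"
      have "m \<in> pts_closed \<omega> z s' u" unfolding m_def by (rule Max_pts_closed_in[OF om False])
      then have m: "m \<in> pts_closed \<omega> z s u" "s' \<le> m" using ss by (auto simp: pts_closed_iff)
      have "Max (pts_closed \<omega> z s u) = m"
        unfolding m_def pts_closed_restrict[OF ss]
        by (rule Max_upper_part[OF pts_closed_finite[OF om] m, symmetric])
      then have "V z u = f (THE i. (z, i, m) \<in> \<omega>)
                  (\<lambda>y\<in>A (THE i. (z, i, m) \<in> \<omega>). before_val \<omega> s \<xi> V (z + y) m)"
        using evol_unfold[OF om, of f s \<xi> z u] m(1) unfolding V_def by (auto simp: Let_def)
      then show ?thesis using False bv[OF m(2)] by (simp add: W_def m_def Let_def)
    qed (simp add: W_def)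
  qed
  then have "evol A f \<omega> s' \<eta> = W" by (rule evol_eqI[OF om])
  then show ?thesis using bv[OF ts] unfolding V_def \<eta>_def by simp
qed

section \<open>Translation invariance\<close>

lemma shift_eq: "shift x t \<omega> = {(z, i, u). (z + x, i, u + t) \<in> \<omega>}"
  unfolding shift_def by (force simp: image_iff)

lemma shift_mem: "(z, i, u) \<in> shift x t \<omega> \<longleftrightarrow> (z + x, i, u + t) \<in> \<omega>"
  by (simp add: shift_eq)

lemma shift_0: "shift 0 0 \<omega> = \<omega>"
  by (auto simp: shift_eq)

lemma shift_times:
  "{v. (z, i, v) \<in> shift x t \<omega> \<and> P v} = (\<lambda>q. q - t) ` {q. (z + x, i, q) \<in> \<omega> \<and> P (q - t)}"
  by (force simp: shift_mem image_iff)

lemma finite_shift_times: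
  "finite {v. (z, i, v) \<in> shift x t \<omega> \<and> P v} \<longleftrightarrow> finite {q. (z + x, i, q) \<in> \<omega> \<and> P (q - t)}"
  unfolding shift_times by (rule finite_image_iff) (simp add: inj_on_def)

lemma card_shift_times:
  "card {v. (z, i, v) \<in> shift x t \<omega> \<and> P v} = card {q. (z + x, i, q) \<in> \<omega> \<and> P (q - t)}"
  unfolding shift_times by (rule card_image) (simp add: inj_on_def)

lemma infinite_above_level:
  assumes "\<And>a b. finite {q. Q q \<and> a \<le> q \<and> q \<le> b}" and "infinite {q. Q q \<and> q > (0::real)}"
  shows "infinite {q. Q q \<and> q > t}"
proof
  assume "finite {q. Q q \<and> q > t}"
  moreover have "{q. Q q \<and> q > 0} \<subseteq> {q. Q q \<and> q > t} \<union> {q. Q q \<and> 0 \<le> q \<and> q \<le> t}" by auto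
  ultimately show False using assms by (meson finite_UnI finite_subset)
qed

lemma infinite_below_level:
  assumes "\<And>a b. finite {q. Q q \<and> a \<le> q \<and> q \<le> b}" and "infinite {q. Q q \<and> q < (0::real)}"
  shows "infinite {q. Q q \<and> q < t}"
proof
  assume "finite {q. Q q \<and> q < t}"
  moreover have "{q. Q q \<and> q < 0} \<subseteq> {q. Q q \<and> q < t} \<union> {q. Q q \<and> t \<le> q \<and> q \<le> 0}" by auto
  ultimately show False using assms by (meson finite_UnI finite_subset)
qed

lemma shift_canonical_space:
  assumes om: "\<omega> \<in> canonical_space A"
  shows "shift x t \<omega> \<in> canonical_space A"
proof -
  have lf: "\<And>z i a b. finite {q. (z, i, q) \<in> \<omega> \<and> a \<le> q \<and> q \<le> b}"
    using canonical_space_locally_finite[OF om] .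
  have "finite {q. (z + x, i, q) \<in> \<omega> \<and> a \<le> q - t \<and> q - t \<le> b}" for z i a b
    using lf[of "z + x" i "a + t" "b + t"] by (simp add: algebra_simps)
  moreover have "infinite {q. (z + x, i, q) \<in> \<omega> \<and> q - t > 0}" for z i
    using infinite_above_level[OF lf, of "z + x" i t] om unfolding canonical_space_def by simp
  moreover have "infinite {q. (z + x, i, q) \<in> \<omega> \<and> q - t < 0}" for z i
    using infinite_below_level[OF lf, of "z + x" i t] om unfolding canonical_space_def by simp
  moreover have "p = q" if "p \<in> shift x t \<omega>" "q \<in> shift x t \<omega>" "time p = time q" for p q
    using that canonical_space_distinct_times[OF om, of "(fst p + x, fst (snd p), time p + t)"
        "(fst q + x, fst (snd q), time q + t)"]
    by (cases p, cases q) (auto simp: shift_mem time_def)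
  moreover have "filterlim s at_bot sequentially"
    if "\<forall>n. (y n, j n, s n) \<in> shift x t \<omega> \<and> y (Suc n) - y n \<in> A (j n) \<and> s (Suc n) < s n"
    for y :: "nat \<Rightarrow> int ^ _" and j s
  proof -
    have "filterlim (\<lambda>n. s n + t) at_bot sequentially"
      by (rule canonical_space_chain[OF om, of "\<lambda>n. y n + x" j]) (use that in \<open>auto simp: shift_mem\<close>)
    then show ?thesis
      unfolding filterlim_at_bot by (metis (mono_tags, lifting) add_le_cancel_right eventually_mono)
  qed
  ultimately show ?thesis unfolding canonical_space_def by (simp add: finite_shift_times) blast
qed

lemma pts_closed_shift:
  "pts_closed (shift x t \<omega>) z a b = (\<lambda>q. q - t) ` pts_closed \<omega> (z + x) (a + t) (b + t)"
  by (force simp: pts_closed_iff shift_mem image_iff)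

lemma pts_open_shift:
  "pts_open (shift x t \<omega>) z a b = (\<lambda>q. q - t) ` pts_open \<omega> (z + x) (a + t) (b + t)"
  by (force simp: pts_open_iff shift_mem image_iff)

lemma Max_translate: "finite S \<Longrightarrow> S \<noteq> {} \<Longrightarrow> Max ((\<lambda>q. q - t) ` S) = Max S - (t::real)"
  by (rule mono_Max_commute[symmetric]) (auto simp: mono_def)

lemma before_val_shift:
  assumes om: "\<omega> \<in> canonical_space (A :: 'i::finite \<Rightarrow> _)"
  shows "before_val (shift x t \<omega>) s (\<lambda>w. \<eta> (w + x)) (\<lambda>z u. V (z + x) (u + t)) w v
       = before_val \<omega> (s + t) \<eta> V (w + x) (v + t)"
  using Max_translate[OF pts_open_finite[OF om], of "w + x" "s + t" "v + t" t]
  by (auto simp: before_val_def pts_open_shift)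

lemma evol_shift:
  assumes om: "\<omega> \<in> canonical_space (A :: 'i::finite \<Rightarrow> _)"
  shows "evol A f (shift x t \<omega>) s (\<lambda>w. \<eta> (w + x)) z u = evol A f \<omega> (s + t) \<eta> (z + x) (u + t)"
proof -
  define V where "V = evol A f \<omega> (s + t) \<eta>"
  define W where "W = (\<lambda>z u. V (z + x) (u + t))"
  define \<omega>' where "\<omega>' = shift x t \<omega>"
  have "evol_eqn A f \<omega>' s (\<lambda>w. \<eta> (w + x)) W"
    unfolding evol_eqn_def
  proof (intro allI)
    fix z u
    show "W z u = (if pts_closed \<omega>' z s u = {} then \<eta> (z + x)
         else (let t = Max (pts_closed \<omega>' z s u); i = (THE i. (z, i, t) \<in> \<omega>')
               in f i (\<lambda>y\<in>A i. before_val \<omega>' s (\<lambda>w. \<eta> (w + x)) W (z + y) t)))"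
    proof (cases "pts_closed \<omega> (z + x) (s + t) (u + t) = {}")
      case True
      then show ?thesis
        using evol_unfold[OF om, of f "s + t" \<eta> "z + x" "u + t"]
        by (simp add: W_def V_def pts_closed_shift \<omega>'_def)
    next
      case False
      define m where "m = Max (pts_closed \<omega> (z + x) (s + t) (u + t))"
      have "Max (pts_closed \<omega>' z s u) = m - t"
        unfolding \<omega>'_def pts_closed_shift m_def by (rule Max_translate[OF pts_closed_finite[OF om] False])
      moreover have "(THE i. (z, i, m - t) \<in> \<omega>') = (THE i. (z + x, i, m) \<in> \<omega>)"
        by (simp add: shift_mem \<omega>'_def)
      moreover have "before_val \<omega>' s (\<lambda>w. \<eta> (w + x)) W (z + y) (m - t)
                   = before_val \<omega> (s + t) \<eta> V (z + x + y) m" for y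
        unfolding W_def \<omega>'_def before_val_shift[OF om] by (simp add: algebra_simps)
      moreover have "pts_closed \<omega>' z s u \<noteq> {}" using False by (simp add: \<omega>'_def pts_closed_shift)
      ultimately show ?thesis
        using evol_unfold[OF om, of f "s + t" \<eta> "z + x" "u + t"] False
        by (simp add: W_def V_def m_def Let_def)
    qed
  qed
  moreover have "\<omega>' \<in> canonical_space A" unfolding \<omega>'_def by (rule shift_canonical_space[OF om])
  ultimately have "evol A f \<omega>' s (\<lambda>w. \<eta> (w + x)) = W" using evol_eqI by blast
  then show ?thesis by (simp add: W_def V_def \<omega>'_def)
qed

lemma Phi_before_shift:
  assumes "\<omega> \<in> canonical_space (A :: 'i::finite \<Rightarrow> _)"
  shows "Phi_before A f (shift x t \<omega>) s v (\<lambda>w. \<eta> (w + x)) z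
       = before_val \<omega> (s + t) \<eta> (evol A f \<omega> (s + t) \<eta>) (z + x) (v + t)"
proof -
  have "evol A f (shift x t \<omega>) s (\<lambda>w. \<eta> (w + x)) = (\<lambda>z u. evol A f \<omega> (s + t) \<eta> (z + x) (u + t))"
    by (intro ext) (rule evol_shift[OF assms])
  then show ?thesis unfolding Phi_before_def by (simp add: before_val_shift[OF assms])
qed

lemma e_val_shift:
  assumes "\<omega> \<in> canonical_space (A :: 'i::finite \<Rightarrow> _)"
  shows "e_val A f (shift x t \<omega>) (w, i, u) s (\<lambda>z. \<eta> (z + x))
       = evol A f \<omega> (s + t) \<eta> (w + x) (u + t)"
  unfolding e_val_def Phi_def by (simp add: evol_shift[OF assms])

section \<open>Coalescence at the time \<open>T*\<close>\<close>

lemma Amb_Suc_I: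
  assumes "(x, t) \<in> Amb A H \<omega> n" "(w, i, u) \<in> H (shift x t \<omega>)" "y \<in> A i"
  shows "(w + x + y, u + t) \<in> Amb A H \<omega> (Suc n)"
proof -
  have "(w + x, i, u + t) \<in> H_shift H \<omega> x t"
    unfolding H_shift_def using assms(2) by (rule rev_image_eqI) simp
  then show ?thesis using assms(1,3) by (simp only: Amb.simps) force
qed

lemma Amb_Suc_E:
  assumes "p \<in> Amb A H \<omega> (Suc n)"
  obtains x t w i u y where "(x, t) \<in> Amb A H \<omega> n" "(w, i, u) \<in> H (shift x t \<omega>)" "y \<in> A i"
    "p = (w + x + y, u + t)"
  using assms unfolding Amb.simps H_shift_def by fastforce

lemma Amb_inf_0: "(0, 0) \<in> Amb_inf A H \<omega>"
  unfolding Amb_inf_def by (rule UN_I[of 0]) simp_all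

lemma Tstar_le:
  assumes "finite (Amb_inf A H \<omega>)" "(x, t) \<in> Amb_inf A H \<omega>"
  shows "Tstar A T H \<omega> \<le> ereal t + T (shift x t \<omega>)"
  unfolding Tstar_def using assms by (auto intro: INF_lower2)

text \<open>The origin is an ambiguity, hence \<open>T* \<le> T\<close>.\<close>
lemma Tstar_le_T: "Tstar A T H \<omega> \<le> T \<omega>"
  using Tstar_le[OF _ Amb_inf_0, of A H \<omega> T] by (auto simp: Tstar_def shift_0)

text \<open>The defining property of a CFTP time with ambiguities at a single configuration:
  agreement at the ambiguity points forces agreement at the origin.\<close>
definition resolves :: "('i \<Rightarrow> (int ^ 'd::finite) set) \<Rightarrow> ('i \<Rightarrow> (int ^ 'd \<Rightarrow> 's) \<Rightarrow> 's)
    \<Rightarrow> (('d, 'i) pt set \<Rightarrow> ereal) \<Rightarrow> (('d, 'i) pt set \<Rightarrow> ('d, 'i) pt set) \<Rightarrow> ('d, 'i) pt set \<Rightarrow> bool" where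
  "resolves A f T H \<omega> \<longleftrightarrow>
     (\<forall>\<xi>1 \<xi>2. (\<forall>\<alpha>\<in>H \<omega>. e_val A f \<omega> \<alpha> (real_of_ereal (T \<omega>)) \<xi>1 = e_val A f \<omega> \<alpha> (real_of_ereal (T \<omega>)) \<xi>2)
        \<longrightarrow> Phi_before A f \<omega> (real_of_ereal (T \<omega>)) 0 \<xi>1 0 = Phi_before A f \<omega> (real_of_ereal (T \<omega>)) 0 \<xi>2 0)"

text \<open>One step of the coalescence argument: translating the property of \<open>(T, H)\<close> from
  \<open>\<tau>_{x,t}\<omega>\<close> back to \<open>\<omega>\<close>, the value at \<open>(x, t-)\<close> of the evolution started at any
  \<open>S \<le> t + T(\<tau>_{x,t}\<omega>)\<close> is determined by its values at the ambiguities generated by \<open>(x, t)\<close>.\<close>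
lemma coalescence_step:
  fixes A :: "'i::finite \<Rightarrow> (int ^ 'd::finite) set"
  assumes om: "\<omega> \<in> canonical_space A"
    and res: "resolves A f T H (shift x t \<omega>)"
    and T': "T (shift x t \<omega>) = ereal T'" "T' < 0"
    and Hsub: "H (shift x t \<omega>) \<subseteq> Pt (shift x t \<omega>) (T (shift x t \<omega>))"
    and S: "S \<le> T' + t"
    and agree: "\<And>w i u y. (w, i, u) \<in> H (shift x t \<omega>) \<Longrightarrow> y \<in> A i \<Longrightarrow>
        before_val \<omega> S \<xi>1 (evol A f \<omega> S \<xi>1) (w + x + y) (u + t)
      = before_val \<omega> S \<xi>2 (evol A f \<omega> S \<xi>2) (w + x + y) (u + t)"
  shows "before_val \<omega> S \<xi>1 (evol A f \<omega> S \<xi>1) x t = before_val \<omega> S \<xi>2 (evol A f \<omega> S \<xi>2) x t"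
proof -
  define s where "s = T' + t"
  define \<eta> where "\<eta> \<xi> = (\<lambda>z. before_val \<omega> S \<xi> (evol A f \<omega> S \<xi>) z s)" for \<xi>
  have restart: "before_val \<omega> S \<xi> (evol A f \<omega> S \<xi>) w v
      = before_val \<omega> s (\<eta> \<xi>) (evol A f \<omega> s (\<eta> \<xi>)) w v" if "s \<le> v" for \<xi> w v
    unfolding \<eta>_def using evol_restart[OF om _ that] S s_def by blast
  have e_val_eq: "e_val A f (shift x t \<omega>) \<alpha> T' (\<lambda>w. \<eta> \<xi> (w + x))
      = f i (\<lambda>y\<in>A i. before_val \<omega> S \<xi> (evol A f \<omega> S \<xi>) (w + x + y) (u + t))"
    if \<alpha>: "\<alpha> = (w, i, u)" "\<alpha> \<in> H (shift x t \<omega>)" for \<xi> \<alpha> w i u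
  proof -
    have "\<alpha> \<in> Pt (shift x t \<omega>) (ereal T')" using Hsub that T' by auto
    then have pt: "(w + x, i, u + t) \<in> \<omega>" and su: "s \<le> u + t"
      by (auto simp: Pt_def time_def \<alpha> shift_mem s_def)
    show ?thesis
      unfolding \<alpha> e_val_shift[OF om] s_def[symmetric] evol_at_point[OF om pt su]
      using restart[OF su] by (simp add: add.assoc)
  qed
  have "Phi_before A f (shift x t \<omega>) T' 0 (\<lambda>w. \<eta> \<xi>1 (w + x)) 0
      = Phi_before A f (shift x t \<omega>) T' 0 (\<lambda>w. \<eta> \<xi>2 (w + x)) 0"
    using res[unfolded resolves_def, rule_format, of "\<lambda>w. \<eta> \<xi>1 (w + x)" "\<lambda>w. \<eta> \<xi>2 (w + x)"] T'
    by (force simp: e_val_eq agree intro: arg_cong[where f = "f _"] restrict_ext)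
  then show ?thesis
    using restart[of t] T' by (simp add: Phi_before_shift[OF om] s_def)
qed

lemma finite_key_induct:
  fixes key :: "'a \<Rightarrow> real"
  assumes "finite X" and "p \<in> X"
    and step: "\<And>p. p \<in> X \<Longrightarrow> (\<And>q. q \<in> X \<Longrightarrow> key q < key p \<Longrightarrow> P q) \<Longrightarrow> P p"
  shows "P p"
proof -
  have "\<forall>p\<in>X. card {q \<in> X. key q < key p} = k \<longrightarrow> P p" for k
  proof (induction k rule: less_induct)
    case (less k)
    show ?case
    proof (intro ballI impI)
      fix p assume p: "p \<in> X" and k: "card {q \<in> X. key q < key p} = k"
      show "P p"
      proof (rule step[OF p])
        fix q assume q: "q \<in> X" "key q < key p"
        then have "{q' \<in> X. key q' < key q} \<subset> {q' \<in> X. key q' < key p}" by auto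
        then have "card {q' \<in> X. key q' < key q} < k"
          unfolding k[symmetric] by (rule psubset_card_mono[rotated]) (use assms(1) in simp)
        then show "P q" using less.IH q(1) by blast
      qed
    qed
  qed
  then show ?thesis using assms(2) by blast
qed

text \<open>By induction over the finitely many
  ambiguities, ordered by time, the states at all ambiguities agree.\<close>
theorem Tstar_coalescence:
  fixes A :: "'i::finite \<Rightarrow> (int ^ 'd::finite) set"
  assumes om: "\<omega> \<in> canonical_space A"
    and Tneg: "\<And>x t. T (shift x t \<omega>) < 0"
    and Hsub: "\<And>x t. H (shift x t \<omega>) \<subseteq> Pt (shift x t \<omega>) (T (shift x t \<omega>))"
    and res: "\<And>x t. T (shift x t \<omega>) \<noteq> - \<infinity> \<Longrightarrow> resolves A f T H (shift x t \<omega>)"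
    and fin: "Tstar A T H \<omega> \<noteq> - \<infinity>"
  shows "Phi_before A f \<omega> (real_of_ereal (Tstar A T H \<omega>)) 0 \<xi>1 0
       = Phi_before A f \<omega> (real_of_ereal (Tstar A T H \<omega>)) 0 \<xi>2 0"
proof -
  have finA: "finite (Amb_inf A H \<omega>)" using fin unfolding Tstar_def by (auto split: if_splits)
  have "Tstar A T H \<omega> < 0" using Tstar_le_T[of A T H \<omega>] Tneg[of 0 0] by (simp add: shift_0)
  with fin obtain S where S: "Tstar A T H \<omega> = ereal S" by (cases "Tstar A T H \<omega>") auto
  let ?agree = "\<lambda>(x, t). before_val \<omega> S \<xi>1 (evol A f \<omega> S \<xi>1) x t
                        = before_val \<omega> S \<xi>2 (evol A f \<omega> S \<xi>2) x t"
  have "?agree p" if "p \<in> Amb_inf A H \<omega>" for p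
    using finA that
  proof (rule finite_key_induct[where key = snd])
    fix p assume p: "p \<in> Amb_inf A H \<omega>"
      and IH: "\<And>q. q \<in> Amb_inf A H \<omega> \<Longrightarrow> snd q < snd p \<Longrightarrow> ?agree q"
    obtain x t where xt: "p = (x, t)" by (cases p)
    obtain n where n: "(x, t) \<in> Amb A H \<omega> n" using p unfolding xt Amb_inf_def by blast
    have le: "ereal S \<le> ereal t + T (shift x t \<omega>)" using Tstar_le[OF finA p[unfolded xt], of T] S by simp
    then obtain T' where T': "T (shift x t \<omega>) = ereal T'" using Tneg[of x t]
      by (cases "T (shift x t \<omega>)") auto
    have "before_val \<omega> S \<xi>1 (evol A f \<omega> S \<xi>1) x t = before_val \<omega> S \<xi>2 (evol A f \<omega> S \<xi>2) x t"
    proof (rule coalescence_step[OF om res T' _ Hsub])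
      show "T' < 0" "S \<le> T' + t" using Tneg[of x t] le T' by (auto simp: add.commute)
      fix w i u y assume wiu: "(w, i, u) \<in> H (shift x t \<omega>)" and y: "y \<in> A i"
      have "u < 0" using Hsub[of x t] wiu by (auto simp: Pt_def time_def)
      moreover have "(w + x + y, u + t) \<in> Amb_inf A H \<omega>"
        unfolding Amb_inf_def using Amb_Suc_I[OF n wiu y] by blast
      ultimately show "before_val \<omega> S \<xi>1 (evol A f \<omega> S \<xi>1) (w + x + y) (u + t)
          = before_val \<omega> S \<xi>2 (evol A f \<omega> S \<xi>2) (w + x + y) (u + t)"
        using IH[of "(w + x + y, u + t)"] xt by simp
    qed (use T' in simp)
    then show "?agree p" using xt by simp
  qed
  from this[OF Amb_inf_0] show ?thesis using S by (simp add: Phi_before_def)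
qed

section \<open>Measurability of \<open>T*\<close>\<close>

lemma card_box: "card (\<omega> \<inter> box v j U) = card {s. (v, j, s) \<in> \<omega> \<and> s \<in> U}"
proof -
  have "\<omega> \<inter> box v j U = (\<lambda>s. (v, j, s)) ` {s. (v, j, s) \<in> \<omega> \<and> s \<in> U}"
    unfolding box_def by auto
  then show ?thesis by (simp add: card_image inj_on_def)
qed

lemma bounded_real_subset_Icc:
  assumes "bounded (U :: real set)"
  obtains a b where "U \<subseteq> {a..b}"
proof -
  obtain a where "U \<subseteq> cbox (-a) a" using bounded_subset_cbox_symmetric[OF assms] by blast
  then show ?thesis using that by (simp add: box_real)
qed

lemma bounded_Ico: "bounded {a..<b::real}"
  by (rule bounded_subset[OF compact_imp_bounded[OF compact_Icc[of a b]]]) auto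

lemma bounded_Ico_Int: "bounded ({a..<b::real} \<inter> X)"
  by (rule bounded_subset[OF bounded_Ico]) auto

lemma finite_points_bounded:
  assumes "\<omega> \<in> canonical_space A" "bounded U"
  shows "finite {s. (v, j, s) \<in> \<omega> \<and> s \<in> U}"
proof -
  obtain a b where "U \<subseteq> {a..b}" using bounded_real_subset_Icc[OF assms(2)] by blast
  then have "{s. (v, j, s) \<in> \<omega> \<and> s \<in> U} \<subseteq> {s. (v, j, s) \<in> \<omega> \<and> a \<le> s \<and> s \<le> b}" by auto
  then show ?thesis by (rule finite_subset[OF _ canonical_space_locally_finite[OF assms(1)]])
qed

lemma isolating_radius:
  fixes Q :: "real set"
  assumes "finite {s \<in> Q. t - 1 \<le> s \<and> s \<le> t + 1}"
  shows "\<exists>\<delta>>0. \<forall>s\<in>Q. \<bar>s - t\<bar> < \<delta> \<longrightarrow> s = t"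
proof -
  define F where "F = {s \<in> Q. t - 1 \<le> s \<and> s \<le> t + 1} - {t}"
  have F: "finite F" unfolding F_def using assms by blast
  define \<delta> where "\<delta> = Min (insert 1 ((\<lambda>s. \<bar>s - t\<bar>) ` F))"
  have "0 < \<delta>" unfolding \<delta>_def using F by (subst Min_gr_iff) (auto simp: F_def)
  moreover have le1: "\<delta> \<le> 1" unfolding \<delta>_def using F by auto
  moreover have "s = t" if "s \<in> Q" "\<bar>s - t\<bar> < \<delta>" for s
  proof (rule ccontr)
    assume "s \<noteq> t"
    then have "s \<in> F" using that le1 unfolding F_def by (auto simp: abs_less_iff)
    then have "\<delta> \<le> \<bar>s - t\<bar>" unfolding \<delta>_def using F by auto
    with that(2) show False by simp
  qed
  ultimately show ?thesis by blast
qed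

subsection \<open>Slots: countably many random times enumerating the points\<close>

definition isolating :: "(int ^ 'd::finite) \<times> 'i \<times> rat \<times> rat \<Rightarrow> ('d, 'i) pt set \<Rightarrow> bool" where
  "isolating \<sigma> \<omega> = (case \<sigma> of (v, j, a, b) \<Rightarrow>
     card {s. (v, j, s) \<in> \<omega> \<and> s \<in> {real_of_rat a..<real_of_rat b}} = 1)"

definition slot_time :: "(int ^ 'd::finite) \<times> 'i \<times> rat \<times> rat \<Rightarrow> ('d, 'i) pt set \<Rightarrow> real" where
  "slot_time \<sigma> \<omega> = (case \<sigma> of (v, j, a, b) \<Rightarrow>
     if isolating \<sigma> \<omega> then (THE s. (v, j, s) \<in> \<omega> \<and> s \<in> {real_of_rat a..<real_of_rat b})
     else real_of_rat a)"

lemma isolating_slot_time: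
  assumes "isolating (v, j, a, b) \<omega>"
  shows "{s. (v, j, s) \<in> \<omega> \<and> s \<in> {real_of_rat a..<real_of_rat b}} = {slot_time (v, j, a, b) \<omega>}"
proof -
  obtain s0 where s0: "{s. (v, j, s) \<in> \<omega> \<and> s \<in> {real_of_rat a..<real_of_rat b}} = {s0}"
    using assms unfolding isolating_def by (auto simp: card_1_singleton_iff)
  then have "(THE s. (v, j, s) \<in> \<omega> \<and> s \<in> {real_of_rat a..<real_of_rat b}) = s0"
    by (intro the_equality) (auto simp: set_eq_iff)
  then show ?thesis using s0 assms unfolding slot_time_def by simp
qed

lemma point_in_isolating_slot:
  assumes om: "\<omega> \<in> canonical_space A" and p: "(v, j, t) \<in> \<omega>"
  obtains \<sigma> where "isolating \<sigma> \<omega>" "slot_time \<sigma> \<omega> = t"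
proof -
  have fin: "finite {s \<in> {s. (v, j, s) \<in> \<omega>}. t - 1 \<le> s \<and> s \<le> t + 1}"
    using canonical_space_locally_finite[OF om, of v j "t - 1" "t + 1"] by simp
  obtain \<delta> where \<delta>: "0 < \<delta>" "\<forall>s\<in>{s. (v, j, s) \<in> \<omega>}. \<bar>s - t\<bar> < \<delta> \<longrightarrow> s = t"
    using isolating_radius[OF fin] by blast
  obtain ra where ra: "ra \<in> \<rat>" "t - \<delta> < ra" "ra < t"
    using Rats_dense_in_real[of "t - \<delta>" t] \<delta>(1) by auto
  obtain a where a: "t - \<delta> < real_of_rat a" "real_of_rat a < t"
    using ra by (cases rule: Rats_cases) auto
  obtain rb where rb: "rb \<in> \<rat>" "t < rb" "rb < t + \<delta>"
    using Rats_dense_in_real[of t "t + \<delta>"] \<delta>(1) by auto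
  obtain b where b: "t < real_of_rat b" "real_of_rat b < t + \<delta>"
    using rb by (cases rule: Rats_cases) auto
  have only_t: "s = t" if "(v, j, s) \<in> \<omega>" "real_of_rat a \<le> s" "s < real_of_rat b" for s
  proof -
    have "\<bar>s - t\<bar> < \<delta>" unfolding abs_less_iff using that(2,3) a b by linarith
    then show "s = t" using \<delta>(2) that(1) by simp
  qed
  have slot: "{s. (v, j, s) \<in> \<omega> \<and> s \<in> {real_of_rat a..<real_of_rat b}} = {t}"
  proof
    show "{t} \<subseteq> {s. (v, j, s) \<in> \<omega> \<and> s \<in> {real_of_rat a..<real_of_rat b}}" using a b p by simp
    show "{s. (v, j, s) \<in> \<omega> \<and> s \<in> {real_of_rat a..<real_of_rat b}} \<subseteq> {t}"
      using only_t by auto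
  qed
  then have iso: "isolating (v, j, a, b) \<omega>" unfolding isolating_def by simp
  have "slot_time (v, j, a, b) \<omega> = t"
    using isolating_slot_time[OF iso] unfolding slot by (metis singleton_inject)
  then show ?thesis by (rule that[OF iso])
qed

lemma isolating_count_below:
  assumes "isolating (v, j, a, b) \<omega>"
  shows "card {s. (v, j, s) \<in> \<omega> \<and> s \<in> {real_of_rat a..<real_of_rat b} \<inter> {..<c}} = 1
     \<longleftrightarrow> slot_time (v, j, a, b) \<omega> < c"
proof -
  have "{s. (v, j, s) \<in> \<omega> \<and> s \<in> {real_of_rat a..<real_of_rat b} \<inter> {..<c}}
      = {s. (v, j, s) \<in> \<omega> \<and> s \<in> {real_of_rat a..<real_of_rat b}} \<inter> {..<c}" by blast
  also have "\<dots> = {slot_time (v, j, a, b) \<omega>} \<inter> {..<c}" unfolding isolating_slot_time[OF assms] ..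
  finally have count: "{s. (v, j, s) \<in> \<omega> \<and> s \<in> {real_of_rat a..<real_of_rat b} \<inter> {..<c}}
      = {slot_time (v, j, a, b) \<omega>} \<inter> {..<c}" .
  show ?thesis unfolding count by (cases "slot_time (v, j, a, b) \<omega> < c") auto
qed

text \<open>Candidate times for ambiguities: the time \<open>0\<close> of the origin, or a slot time.\<close>
definition cand_time :: "((int ^ 'd::finite) \<times> 'i \<times> rat \<times> rat) option \<Rightarrow> ('d, 'i) pt set \<Rightarrow> real" where
  "cand_time c \<omega> = (case c of None \<Rightarrow> 0 | Some \<sigma> \<Rightarrow> slot_time \<sigma> \<omega>)"

definition cand_valid :: "((int ^ 'd::finite) \<times> 'i \<times> rat \<times> rat) option \<Rightarrow> ('d, 'i) pt set \<Rightarrow> bool" where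
  "cand_valid c \<omega> = (case c of None \<Rightarrow> True | Some \<sigma> \<Rightarrow> isolating \<sigma> \<omega>)"

definition grid :: "real \<Rightarrow> nat \<Rightarrow> real" where
  "grid s n = real_of_int \<lfloor>s * real (Suc n)\<rfloor> / real (Suc n)"

lemma grid_le: "grid s n \<le> s"
proof -
  have "real_of_int \<lfloor>s * real (Suc n)\<rfloor> \<le> s * real (Suc n)" by (rule of_int_floor_le)
  then show ?thesis unfolding grid_def by (simp add: divide_le_eq)
qed

lemma grid_gt: "s - inverse (real (Suc n)) < grid s n"
proof -
  have "s * real (Suc n) - 1 < real_of_int \<lfloor>s * real (Suc n)\<rfloor>" by linarith
  then have "(s * real (Suc n) - 1) / real (Suc n) < grid s n"
    unfolding grid_def by (simp add: divide_strict_right_mono)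
  then show ?thesis by (simp add: field_simps)
qed

lemma grid_cell: "s < grid s n + inverse (real (Suc n))"
proof -
  have "s * real (Suc n) < real_of_int \<lfloor>s * real (Suc n)\<rfloor> + 1" by linarith
  then show ?thesis unfolding grid_def by (simp add: field_simps)
qed

lemma grid_eventually_gt:
  assumes "x < s"
  shows "eventually (\<lambda>n. x < grid s n) sequentially"
proof -
  have "eventually (\<lambda>n. inverse (real (Suc n)) < s - x) sequentially"
    by (rule order_tendstoD(2)[OF LIMSEQ_inverse_real_of_nat]) (use assms in simp)
  then show ?thesis
    by (rule eventually_mono) (use grid_gt[of s] in \<open>smt (verit)\<close>)
qed

lemma grid_same_side_eventually:
  "eventually (\<lambda>n. (c + grid s n \<le> q \<longleftrightarrow> c + s \<le> q) \<and> (q < d + grid s n \<longleftrightarrow> q < d + s)) sequentially"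
proof -
  have "eventually (\<lambda>n. c + grid s n \<le> q \<longleftrightarrow> c + s \<le> q) sequentially"
  proof (cases "c + s \<le> q")
    case True
    show ?thesis
    proof (intro always_eventually allI)
      fix n show "c + grid s n \<le> q \<longleftrightarrow> c + s \<le> q" using grid_le[of s n] True by linarith
    qed
  next
    case False then show ?thesis using grid_eventually_gt[of "q - c" s] by (auto elim!: eventually_mono)
  qed
  moreover have "eventually (\<lambda>n. q < d + grid s n \<longleftrightarrow> q < d + s) sequentially"
  proof (cases "q < d + s")
    case True then show ?thesis using grid_eventually_gt[of "q - d" s] by (auto elim!: eventually_mono)
  next
    case False
    show ?thesis
    proof (intro always_eventually allI)
      fix n show "q < d + grid s n \<longleftrightarrow> q < d + s" using grid_le[of s n] False by linarith
    qed
  qed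
  ultimately show ?thesis by eventually_elim blast
qed

lemma grid_window_eventually:
  fixes Q :: "real set"
  assumes "finite {q \<in> Q. c + s - 1 \<le> q \<and> q \<le> d + s}"
  shows "eventually (\<lambda>n. {q \<in> Q. q \<in> {c + grid s n..<d + grid s n}} = {q \<in> Q. q - s \<in> {c..<d}}) sequentially"
proof -
  let ?F = "{q \<in> Q. c + s - 1 \<le> q \<and> q \<le> d + s}"
  have "eventually (\<lambda>n. \<forall>q\<in>?F. (c + grid s n \<le> q \<longleftrightarrow> c + s \<le> q) \<and> (q < d + grid s n \<longleftrightarrow> q < d + s)) sequentially"
    by (rule eventually_ball_finite[OF assms]) (simp add: grid_same_side_eventually)
  then show ?thesis
  proof (rule eventually_mono)
    fix n assume n: "\<forall>q\<in>?F. (c + grid s n \<le> q \<longleftrightarrow> c + s \<le> q) \<and> (q < d + grid s n \<longleftrightarrow> q < d + s)"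
    have "inverse (real (Suc n)) \<le> 1" by (simp add: inverse_le_1_iff)
    then have lo: "s - 1 < grid s n" using grid_gt[of s n] by linarith
    show "{q \<in> Q. q \<in> {c + grid s n..<d + grid s n}} = {q \<in> Q. q - s \<in> {c..<d}}"
    proof (intro set_eqI iffI)
      fix q assume "q \<in> {q \<in> Q. q \<in> {c + grid s n..<d + grid s n}}"
      moreover then have "q \<in> ?F" using lo grid_le[of s n] by auto
      ultimately show "q \<in> {q \<in> Q. q - s \<in> {c..<d}}" using n by auto
    next
      fix q assume "q \<in> {q \<in> Q. q - s \<in> {c..<d}}"
      moreover then have "q \<in> ?F" by auto
      ultimately show "q \<in> {q \<in> Q. q \<in> {c + grid s n..<d + grid s n}}" using n by auto
    qed
  qed
qed

lemma mem_iff_grid_cells: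
  fixes Q :: "real set"
  assumes "finite {s \<in> Q. u - 1 \<le> s \<and> s \<le> u + 1}"
  shows "u \<in> Q \<longleftrightarrow> (\<forall>n. Q \<inter> {grid u n..<grid u n + inverse (real (Suc n))} \<noteq> {})"
proof
  assume "u \<in> Q"
  then have "u \<in> Q \<inter> {grid u n..<grid u n + inverse (real (Suc n))}" for n
    using grid_le[of u n] grid_cell[of u n] by simp
  then show "\<forall>n. Q \<inter> {grid u n..<grid u n + inverse (real (Suc n))} \<noteq> {}" by blast
next
  assume cells: "\<forall>n. Q \<inter> {grid u n..<grid u n + inverse (real (Suc n))} \<noteq> {}"
  obtain \<delta> where \<delta>: "0 < \<delta>" "\<forall>s\<in>Q. \<bar>s - u\<bar> < \<delta> \<longrightarrow> s = u"
    using isolating_radius[OF assms] by blast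
  obtain n where n: "inverse (real (Suc n)) < \<delta>" using reals_Archimedean[OF \<delta>(1)] ..
  have "Q \<inter> {grid u n..<grid u n + inverse (real (Suc n))} \<noteq> {}" using cells by (rule spec)
  then obtain s where "s \<in> Q \<inter> {grid u n..<grid u n + inverse (real (Suc n))}" by (meson ex_in_conv)
  then have s: "s \<in> Q" "grid u n \<le> s" "s < grid u n + inverse (real (Suc n))" by auto
  have "\<bar>s - u\<bar> < \<delta>" using s(2,3) n grid_le[of u n] grid_gt[of u n] by (simp add: abs_less_iff)
  then show "u \<in> Q" using \<delta>(2) s(1) by metis
qed

definition shifted_count :: "int ^ 'd::finite \<Rightarrow> 'i \<Rightarrow> real set \<Rightarrow> ('d, 'i) pt set \<times> real \<Rightarrow> real" where
  "shifted_count v j U p = real (card {s. (v, j, s) \<in> fst p \<and> s - snd p \<in> U})"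

lemma card_UN_disjoint_eventually:
  assumes fin: "finite (\<Union>n. Y n)" and disj: "disjoint_family Y"
  shows "eventually (\<lambda>m. (\<Sum>n<m. card (Y n)) = card (\<Union>n. Y n)) sequentially"
proof -
  obtain idx where idx: "\<And>s. s \<in> (\<Union>n. Y n) \<Longrightarrow> s \<in> Y (idx s)" by (metis UN_E)
  define m0 where "m0 = Suc (Max (idx ` (\<Union>n. Y n)))"
  have "(\<Sum>n<m. card (Y n)) = card (\<Union>n. Y n)" if "m0 \<le> m" for m
  proof -
    have "(\<Union>n<m. Y n) = (\<Union>n. Y n)"
    proof (intro set_eqI iffI)
      fix s assume s: "s \<in> (\<Union>n. Y n)"
      have "idx s \<le> Max (idx ` (\<Union>n. Y n))" using fin s by simp
      then have "idx s < m" using that unfolding m0_def by simp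
      then show "s \<in> (\<Union>n<m. Y n)" using idx[OF s] by blast
    qed auto
    moreover have "finite (Y n)" for n by (rule finite_subset[OF _ fin]) auto
    ultimately show ?thesis
      using disj by (metis card_UN_disjoint disjoint_family_on_def finite_lessThan iso_tuple_UNIV_I)
  qed
  then show ?thesis unfolding eventually_sequentially by blast
qed

lemma shifted_count_Diff:
  assumes "finite {s. (v, j, s) \<in> fst p \<and> s - snd p \<in> W}" "X \<subseteq> W"
  shows "shifted_count v j (W - X) p = shifted_count v j W p - shifted_count v j X p"
proof -
  have "{s. (v, j, s) \<in> fst p \<and> s - snd p \<in> W - X}
      = {s. (v, j, s) \<in> fst p \<and> s - snd p \<in> W} - {s. (v, j, s) \<in> fst p \<and> s - snd p \<in> X}"
    by auto
  moreover have "{s. (v, j, s) \<in> fst p \<and> s - snd p \<in> X} \<subseteq> {s. (v, j, s) \<in> fst p \<and> s - snd p \<in> W}"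
    using assms(2) by auto
  ultimately show ?thesis
    using assms(1) unfolding shifted_count_def by (simp add: card_Diff_subset finite_subset card_mono of_nat_diff)
qed

lemma shifted_count_UN:
  assumes "finite {s. (v, j, s) \<in> fst p \<and> s - snd p \<in> W}" "disjoint_family X"
  shows "(\<lambda>m. \<Sum>n<m. shifted_count v j (X n \<inter> W) p) \<longlonglongrightarrow> shifted_count v j ((\<Union>n. X n) \<inter> W) p"
proof (rule tendsto_eventually)
  define Y where "Y n = {s. (v, j, s) \<in> fst p \<and> s - snd p \<in> X n \<inter> W}" for n
  have "(\<Union>n. Y n) = {s. (v, j, s) \<in> fst p \<and> s - snd p \<in> (\<Union>n. X n) \<inter> W}" unfolding Y_def by auto
  moreover have "finite (\<Union>n. Y n)" by (rule finite_subset[OF _ assms(1)]) (auto simp: Y_def)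
  moreover have "disjoint_family Y" using assms(2) unfolding Y_def disjoint_family_on_def by auto
  ultimately show "eventually (\<lambda>m. (\<Sum>n<m. shifted_count v j (X n \<inter> W) p)
      = shifted_count v j ((\<Union>n. X n) \<inter> W) p) sequentially"
    using card_UN_disjoint_eventually[of Y] unfolding shifted_count_def Y_def
    by (auto elim!: eventually_mono simp flip: of_nat_sum)
qed

lemma Int_stable_lessThan: "Int_stable (range (lessThan :: real \<Rightarrow> real set))"
proof (rule Int_stableI_image)
  fix a b :: real
  have "{..<a} \<inter> {..<b} = {..<min a b}" by auto
  then show "\<exists>c\<in>UNIV. {..<a} \<inter> {..<b} = {..<c}" by blast
qed

locale canonical_measure =
  fixes A :: "'i::finite \<Rightarrow> (int ^ 'd::finite) set" and M :: "('d, 'i) pt set measure"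
  assumes space_M: "space M = canonical_space A"
    and sets_M: "sets M = sigma_sets (canonical_space A)
                   (count_gen (canonical_space A) {U. U \<in> sets borel \<and> bounded U})"
begin

lemma count_sets:
  assumes "U \<in> sets borel" "bounded U"
  shows "{\<omega> \<in> space M. card {s. (v, j, s) \<in> \<omega> \<and> s \<in> U} = k} \<in> sets M"
proof -
  have "{\<omega> \<in> space M. card {s. (v, j, s) \<in> \<omega> \<and> s \<in> U} = k}
      = {\<omega> \<in> canonical_space A. card (\<omega> \<inter> box v j U) = k}"
    by (simp add: space_M card_box)
  also have "\<dots> \<in> count_gen (canonical_space A) {U. U \<in> sets borel \<and> bounded U}"
    unfolding count_gen_def using assms by blast
  finally show ?thesis unfolding sets_M by (rule sigma_sets.Basic)
qed

lemma count_measurable: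
  assumes "U \<in> sets borel" "bounded U"
  shows "(\<lambda>\<omega>. real (card {s. (v, j, s) \<in> \<omega> \<and> s \<in> U})) \<in> borel_measurable M"
proof -
  have "(\<lambda>\<omega>. card {s. (v, j, s) \<in> \<omega> \<and> s \<in> U}) \<in> measurable M (count_space UNIV)"
    unfolding measurable_count_space_eq2_countable
    using count_sets[OF assms] by (auto simp: vimage_def Int_def conj_commute)
  then show ?thesis by (rule measurable_compose) simp
qed

lemma isolating_sets: "{\<omega> \<in> space M. isolating \<sigma> \<omega>} \<in> sets M"
proof -
  obtain v j a b where \<sigma>: "\<sigma> = (v, j, a, b)" by (cases \<sigma>) auto
  have "{\<omega> \<in> space M. isolating \<sigma> \<omega>}
      = {\<omega> \<in> space M. card {s. (v, j, s) \<in> \<omega> \<and> s \<in> {real_of_rat a..<real_of_rat b}} = 1}"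
    by (simp add: isolating_def \<sigma>)
  also have "\<dots> \<in> sets M" by (rule count_sets) (simp_all add: bounded_Ico)
  finally show ?thesis .
qed

lemma slot_time_measurable: "slot_time \<sigma> \<in> borel_measurable M"
proof -
  obtain v j a b where \<sigma>: "\<sigma> = (v, j, a, b)" by (cases \<sigma>) auto
  show ?thesis unfolding borel_measurable_iff_less
  proof
    fix c :: real
    let ?C = "\<lambda>\<omega>. card {s. (v, j, s) \<in> \<omega> \<and> s \<in> {real_of_rat a..<real_of_rat b} \<inter> {..<c}} = 1"
    have "{\<omega> \<in> space M. slot_time \<sigma> \<omega> < c} =
       ({\<omega> \<in> space M. ?C \<omega>} \<inter> {\<omega> \<in> space M. isolating \<sigma> \<omega>})
       \<union> ((space M - {\<omega> \<in> space M. isolating \<sigma> \<omega>}) \<inter> {\<omega> \<in> space M. real_of_rat a < c})"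
      using isolating_count_below[of v j a b _ c] by (auto simp: \<sigma> slot_time_def)
    also have "\<dots> \<in> sets M"
    proof (intro sets.Un sets.Int sets.Diff)
      show "{\<omega> \<in> space M. ?C \<omega>} \<in> sets M" by (rule count_sets) (simp_all add: bounded_Ico_Int)
      show "{\<omega> \<in> space M. real_of_rat a < c} \<in> sets M" by (cases "real_of_rat a < c") simp_all
    qed (simp_all add: isolating_sets)
    finally show "{\<omega> \<in> space M. slot_time \<sigma> \<omega> < c} \<in> sets M" .
  qed
qed

text \<open>Counts in windows translated by a real parameter are jointly measurable; first for
  intervals, by approximating the translation from below on a grid.\<close>
lemma shifted_count_Ico_measurable:
  "shifted_count v j {c..<d} \<in> borel_measurable (M \<Otimes>\<^sub>M borel)"
proof -
  define g where "g n p = real (card {s. (v, j, s) \<in> fst p \<and> s \<in> {c + grid (snd p) n..<d + grid (snd p) n}})"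
    for n and p :: "('d, 'i) pt set \<times> real"
  have "g n \<in> borel_measurable (M \<Otimes>\<^sub>M borel)" for n
  proof -
    let ?h = "\<lambda>(m::int) p. real (card {s. (v, j, s) \<in> fst p \<and>
                 s \<in> {c + real_of_int m / real (Suc n)..<d + real_of_int m / real (Suc n)}})"
    have "(\<lambda>p. ?h \<lfloor>snd p * real (Suc n)\<rfloor> p) \<in> borel_measurable (M \<Otimes>\<^sub>M borel)"
    proof (rule measurable_compose_countable[where f = ?h])
      fix m :: int
      show "?h m \<in> borel_measurable (M \<Otimes>\<^sub>M borel)"
        by (rule measurable_compose[OF measurable_fst count_measurable])
          (simp_all add: bounded_Ico)
    qed measurable
    then show ?thesis unfolding g_def grid_def by simp
  qed
  moreover have "(\<lambda>n. g n p) \<longlonglongrightarrow> shifted_count v j {c..<d} p" if "p \<in> space (M \<Otimes>\<^sub>M borel)" for p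
  proof (rule tendsto_eventually)
    have "fst p \<in> canonical_space A" using that by (auto simp: space_pair_measure space_M)
    then have "finite {q \<in> {s. (v, j, s) \<in> fst p}. c + snd p - 1 \<le> q \<and> q \<le> d + snd p}"
      using canonical_space_locally_finite by simp
    from grid_window_eventually[OF this]
    show "eventually (\<lambda>n. g n p = shifted_count v j {c..<d} p) sequentially"
      by (rule eventually_mono) (simp add: g_def shifted_count_def)
  qed
  ultimately show ?thesis by (rule borel_measurable_LIMSEQ_real[rotated])
qed

lemma finite_window:
  "p \<in> space (M \<Otimes>\<^sub>M borel) \<Longrightarrow> finite {s. (v, j, s) \<in> fst p \<and> s - snd p \<in> {a..<b}}"
  by (rule finite_subset[OF _ canonical_space_locally_finite[of "fst p" A v j "a + snd p" "b + snd p"]])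
    (auto simp: space_pair_measure space_M)

text \<open>Extension from intervals to Borel windows by Dynkin's \<open>\<pi>\<close>-\<open>\<lambda>\<close> argument.\<close>
lemma shifted_count_window_measurable:
  assumes "U \<in> sets borel"
  shows "shifted_count v j (U \<inter> {- real N..<real N}) \<in> borel_measurable (M \<Otimes>\<^sub>M borel)"
proof -
  define W where "W = {- real N..<real N}"
  have "Int_stable (range (lessThan :: real \<Rightarrow> real set))" by (rule Int_stable_lessThan)
  moreover have "range (lessThan :: real \<Rightarrow> real set) \<subseteq> Pow UNIV" by simp
  moreover have "U \<in> sigma_sets UNIV (range lessThan)"
    using assms by (simp add: borel_Iio sets_measure_of)
  ultimately show ?thesis unfolding W_def[symmetric]
  proof (induction U rule: sigma_sets_induct_disjoint)
    case (basic X)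
    then obtain e where "X = {..<e}" by auto
    then have "X \<inter> W = {- real N..<min e (real N)}" unfolding W_def by auto
    then show ?case using shifted_count_Ico_measurable by simp
  next
    case empty
    show ?case by (simp add: shifted_count_def)
  next
    case (compl X)
    have eq: "shifted_count v j ((UNIV - X) \<inter> W) p
        = shifted_count v j W p - shifted_count v j (X \<inter> W) p"
      if "p \<in> space (M \<Otimes>\<^sub>M borel)" for p
      using shifted_count_Diff[OF finite_window[OF that, of v j "- real N" "real N", folded W_def], of "X \<inter> W"]
      by (simp add: W_def Diff_Int_distrib2)
    have "shifted_count v j W \<in> borel_measurable (M \<Otimes>\<^sub>M borel)"
      unfolding W_def by (rule shifted_count_Ico_measurable)
    then have "(\<lambda>p. shifted_count v j W p - shifted_count v j (X \<inter> W) p) \<in> borel_measurable (M \<Otimes>\<^sub>M borel)"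
      using compl.IH by (rule borel_measurable_diff)
    moreover have "shifted_count v j ((UNIV - X) \<inter> W) \<in> borel_measurable (M \<Otimes>\<^sub>M borel)
        \<longleftrightarrow> (\<lambda>p. shifted_count v j W p - shifted_count v j (X \<inter> W) p) \<in> borel_measurable (M \<Otimes>\<^sub>M borel)"
      by (rule measurable_cong) (rule eq)
    ultimately show ?case by simp
  next
    case (union X)
    have "(\<lambda>m. \<Sum>n<m. shifted_count v j (X n \<inter> W) p) \<longlonglongrightarrow> shifted_count v j ((\<Union>n. X n) \<inter> W) p"
      if "p \<in> space (M \<Otimes>\<^sub>M borel)" for p
      using shifted_count_UN[OF finite_window[OF that, of v j "- real N" "real N", folded W_def] union.hyps(1)]
      by (simp add: W_def)
    then show ?case
      by (rule borel_measurable_LIMSEQ_real) (use union.IH in auto)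
  qed
qed

lemma shifted_count_measurable:
  assumes U: "U \<in> sets borel" "bounded U"
  shows "shifted_count v j U \<in> borel_measurable (M \<Otimes>\<^sub>M borel)"
proof -
  obtain a b where ab: "U \<subseteq> {a..b}" using bounded_real_subset_Icc[OF U(2)] by blast
  obtain N :: nat where N: "real N > max \<bar>a\<bar> \<bar>b\<bar>" using reals_Archimedean2 by blast
  have "U \<inter> {- real N..<real N} = U" using ab N by force
  then show ?thesis using shifted_count_window_measurable[OF U(1), of v j N] by simp
qed

text \<open>The shift \<open>(\<omega>, t) \<mapsto> \<tau>_{x,t} \<omega>\<close> is measurable: the counts of the shifted configuration
  are translated counts of the original one.\<close>
lemma shift_measurable: "(\<lambda>p. shift x (snd p) (fst p)) \<in> measurable (M \<Otimes>\<^sub>M borel) M"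
proof (rule measurable_sigma_sets[OF sets_M])
  show "count_gen (canonical_space A) {U. U \<in> sets borel \<and> bounded U} \<subseteq> Pow (canonical_space A)"
    unfolding count_gen_def by auto
  show "(\<lambda>p. shift x (snd p) (fst p)) \<in> space (M \<Otimes>\<^sub>M borel) \<rightarrow> canonical_space A"
    using shift_canonical_space by (auto simp: space_pair_measure space_M)
  fix Y assume "Y \<in> count_gen (canonical_space A) {U. U \<in> sets borel \<and> bounded U}"
  then obtain z i U k where Y: "Y = {\<omega> \<in> canonical_space A. card (\<omega> \<inter> box z i U) = k}"
    and U: "U \<in> sets borel" "bounded U" unfolding count_gen_def by blast
  have "(\<lambda>p. shift x (snd p) (fst p)) -` Y \<inter> space (M \<Otimes>\<^sub>M borel)
      = (shifted_count (z + x) i U) -` {real k} \<inter> space (M \<Otimes>\<^sub>M borel)"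
    unfolding Y shifted_count_def using shift_canonical_space
    by (auto simp: space_pair_measure space_M card_box card_shift_times)
  also have "\<dots> \<in> sets (M \<Otimes>\<^sub>M borel)"
    by (rule measurable_sets[OF shifted_count_measurable[OF U]]) simp
  finally show "(\<lambda>p. shift x (snd p) (fst p)) -` Y \<inter> space (M \<Otimes>\<^sub>M borel) \<in> sets (M \<Otimes>\<^sub>M borel)" .
qed

end

lemma INF_extend_top: "(INF j\<in>J. h j) = (INF j. if j \<in> J then h j else (top :: 'a :: complete_lattice))"
proof (rule antisym)
  show "(INF j\<in>J. h j) \<le> (INF j. if j \<in> J then h j else top)"
    by (rule INF_greatest) (auto intro: INF_lower)
  show "(INF j. if j \<in> J then h j else top) \<le> (INF j\<in>J. h j)"
  proof (rule INF_greatest)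
    fix j assume "j \<in> J"
    then show "(INF j. if j \<in> J then h j else top) \<le> h j" by (intro INF_lower2[of j]) auto
  qed
qed

locale ambiguity_rule = canonical_measure A M
  for A :: "'i::finite \<Rightarrow> (int ^ 'd::finite) set" and M +
  fixes H :: "('d, 'i) pt set \<Rightarrow> ('d, 'i) pt set" and T :: "('d, 'i) pt set \<Rightarrow> ereal"
  assumes H_sub: "\<forall>\<omega>\<in>space M. H \<omega> \<subseteq> Pt \<omega> (T \<omega>)"
    and H_adapted: "\<forall>t::real. t < 0 \<longrightarrow> (\<forall>x i U k. U \<in> sets borel \<longrightarrow> U \<subseteq> {t..<0} \<longrightarrow>
        {\<omega> \<in> space M. card (H \<omega> \<inter> Pt \<omega> (ereal t) \<inter> box x i U) = k}
          \<in> sets (F_sigma (space M) t))"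
begin

lemma F_sigma_subset: "sets (F_sigma (space M) t) \<subseteq> sets M"
proof -
  have G: "count_gen (space M) {U. U \<in> sets borel \<and> U \<subseteq> {t..<0}} \<subseteq> Pow (space M)"
    unfolding count_gen_def by auto
  have "count_gen (space M) {U. U \<in> sets borel \<and> U \<subseteq> {t..<0}}
     \<subseteq> count_gen (canonical_space A) {U. U \<in> sets borel \<and> bounded U}"
    unfolding count_gen_def space_M by (auto intro: bounded_subset[OF bounded_Ico])
  then have "sigma_sets (space M) (count_gen (space M) {U. U \<in> sets borel \<and> U \<subseteq> {t..<0}}) \<subseteq> sets M"
    unfolding sets_M space_M by (rule sigma_sets_mono')
  then show ?thesis unfolding F_sigma_def using G by (simp add: sets_measure_of)
qed

lemma H_point: "\<omega> \<in> space M \<Longrightarrow> (z, i, s) \<in> H \<omega> \<Longrightarrow> (z, i, s) \<in> \<omega> \<and> s < 0 \<and> T \<omega> \<le> ereal s"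
  using H_sub by (force simp: Pt_def time_def)

lemma H_window_sets: "{\<omega> \<in> space M. H \<omega> \<inter> box w i {\<alpha>..<\<beta>} \<noteq> {}} \<in> sets M"
proof (cases "\<alpha> < min \<beta> 0")
  case False
  then have "{\<omega> \<in> space M. H \<omega> \<inter> box w i {\<alpha>..<\<beta>} \<noteq> {}} = {}"
    using H_point by (fastforce simp: box_def)
  then show ?thesis by (simp only:) simp
next
  case True
  let ?U = "{\<alpha>..<min \<beta> 0}"
  have empty_sets: "{\<omega> \<in> space M. card (H \<omega> \<inter> Pt \<omega> (ereal \<alpha>) \<inter> box w i ?U) = 0} \<in> sets M"
  proof -
    have "?U \<in> sets borel" "?U \<subseteq> {\<alpha>..<0}" "\<alpha> < 0" using True by auto
    then show ?thesis using H_adapted F_sigma_subset by blast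
  qed
  have "H \<omega> \<inter> box w i {\<alpha>..<\<beta>} \<noteq> {} \<longleftrightarrow> card (H \<omega> \<inter> Pt \<omega> (ereal \<alpha>) \<inter> box w i ?U) \<noteq> 0"
    if \<omega>: "\<omega> \<in> space M" for \<omega>
  proof -
    have eq: "H \<omega> \<inter> Pt \<omega> (ereal \<alpha>) \<inter> box w i ?U = H \<omega> \<inter> box w i {\<alpha>..<\<beta>}"
      using H_point[OF \<omega>] by (auto simp: Pt_def time_def box_def)
    have "H \<omega> \<inter> box w i {\<alpha>..<\<beta>} \<subseteq> (\<lambda>s. (w, i, s)) ` {s. (w, i, s) \<in> \<omega> \<and> s \<in> {\<alpha>..<\<beta>}}"
      using H_point[OF \<omega>] by (auto simp: box_def)
    moreover have "finite {s. (w, i, s) \<in> \<omega> \<and> s \<in> {\<alpha>..<\<beta>}}"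
      using finite_points_bounded[of \<omega> A "{\<alpha>..<\<beta>}"] \<omega> space_M bounded_Ico by simp
    ultimately have "finite (H \<omega> \<inter> box w i {\<alpha>..<\<beta>})" by (rule finite_subset[OF _ finite_imageI])
    then show ?thesis unfolding eq by simp
  qed
  then have "{\<omega> \<in> space M. H \<omega> \<inter> box w i {\<alpha>..<\<beta>} \<noteq> {}}
      = space M - {\<omega> \<in> space M. card (H \<omega> \<inter> Pt \<omega> (ereal \<alpha>) \<inter> box w i ?U) = 0}"
    by blast
  then show ?thesis using empty_sets by auto
qed

text \<open>Membership of a point of type \<open>(w, i)\<close> at a variable time in \<open>H\<close> is measurable: it is
  decided by the grid cells containing that time.\<close>
lemma H_mem_measurable:
  "Measurable.pred (M \<Otimes>\<^sub>M borel) (\<lambda>p. (w, i, snd p) \<in> H (fst p))"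
proof -
  define cell where "cell n m \<omega> \<longleftrightarrow> H \<omega> \<inter> box w i
      {real_of_int m / real (Suc n)..<real_of_int m / real (Suc n) + inverse (real (Suc n))} \<noteq> {}"
    for n and m :: int and \<omega>
  have [measurable]: "Measurable.pred (M \<Otimes>\<^sub>M borel) (\<lambda>p. cell n \<lfloor>snd p * real (Suc n)\<rfloor> (fst p))" for n
  proof (rule measurable_compose_countable[where f = "\<lambda>m p. cell n m (fst p)"])
    fix m
    have "Measurable.pred M (cell n m)" unfolding pred_def cell_def by (simp add: H_window_sets)
    then show "Measurable.pred (M \<Otimes>\<^sub>M borel) (\<lambda>p. cell n m (fst p))"
      by (rule measurable_compose[OF measurable_fst])
  qed measurable
  have "(w, i, snd p) \<in> H (fst p) \<longleftrightarrow> (\<forall>n. cell n \<lfloor>snd p * real (Suc n)\<rfloor> (fst p))"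
    if "p \<in> space (M \<Otimes>\<^sub>M borel)" for p
  proof -
    have om: "fst p \<in> space M" using that by (auto simp: space_pair_measure)
    let ?Q = "{s. (w, i, s) \<in> H (fst p)}"
    have "finite {s \<in> ?Q. snd p - 1 \<le> s \<and> s \<le> snd p + 1}"
      by (rule finite_subset[OF _ canonical_space_locally_finite[of "fst p" A w i "snd p - 1" "snd p + 1"]])
        (use om H_point[OF om] space_M in auto)
    from mem_iff_grid_cells[OF this] show ?thesis
      unfolding cell_def grid_def by (auto simp: box_def)
  qed
  moreover have "Measurable.pred (M \<Otimes>\<^sub>M borel) (\<lambda>p. \<forall>n. cell n \<lfloor>snd p * real (Suc n)\<rfloor> (fst p))"
    by measurable
  ultimately show ?thesis by (subst measurable_cong) auto
qed

lemma shift_measurable_comp[measurable (raw)]: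
  "f \<in> measurable N M \<Longrightarrow> g \<in> borel_measurable N \<Longrightarrow> (\<lambda>z. shift x (g z) (f z)) \<in> measurable N M"
  using measurable_compose[OF measurable_Pair[of f N M g borel] shift_measurable[of x]] by simp

lemma H_mem_measurable_comp[measurable (raw)]:
  "f \<in> measurable N M \<Longrightarrow> g \<in> borel_measurable N \<Longrightarrow> Measurable.pred N (\<lambda>z. (w, i, g z) \<in> H (f z))"
  using measurable_compose[OF measurable_Pair[of f N M g borel] H_mem_measurable[of w i]] by simp

lemma cand_time_measurable_comp[measurable (raw)]:
  "f \<in> measurable N M \<Longrightarrow> (\<lambda>z. cand_time c (f z)) \<in> borel_measurable N"
  using measurable_compose[OF _ slot_time_measurable] by (cases c) (simp_all add: cand_time_def)

lemma cand_valid_measurable_comp[measurable (raw)]: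
  assumes f: "f \<in> measurable N M"
  shows "Measurable.pred N (\<lambda>z. cand_valid c (f z))"
proof (cases c)
  case (Some \<sigma>)
  have "Measurable.pred M (isolating \<sigma>)" using isolating_sets[of \<sigma>] by (simp add: pred_def)
  from measurable_compose[OF f this] show ?thesis by (simp add: cand_valid_def Some)
qed (simp add: cand_valid_def)

lemma shift_space: "\<omega> \<in> space M \<Longrightarrow> shift x t \<omega> \<in> space M"
  using shift_canonical_space space_M by auto

text \<open>Every ambiguity time is \<open>0\<close> or a point time, hence a candidate time.\<close>
lemma Amb_cand_time:
  assumes om: "\<omega> \<in> space M" and xt: "(x, t) \<in> Amb A H \<omega> n"
  obtains c where "cand_valid c \<omega>" "cand_time c \<omega> = t"
proof (cases n)
  case 0
  then show ?thesis using xt that[of None] by (simp add: cand_valid_def cand_time_def)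
next
  case (Suc m)
  from xt[unfolded Suc] obtain x' t' w i u y where a: "(x', t') \<in> Amb A H \<omega> m"
    "(w, i, u) \<in> H (shift x' t' \<omega>)" "(x, t) = (w + x' + y, u + t')" by (rule Amb_Suc_E)
  have "(w + x', i, t) \<in> \<omega>" using H_point[OF shift_space[OF om] a(2)] a(3) by (simp add: shift_mem)
  then obtain \<sigma> where "isolating \<sigma> \<omega>" "slot_time \<sigma> \<omega> = t"
    using point_in_isolating_slot[of \<omega> A] om space_M by blast
  then show ?thesis using that[of "Some \<sigma>"] by (simp add: cand_valid_def cand_time_def)
qed

text \<open>The recursion defining the ambiguities, with the previous ambiguity time replaced by
  a candidate time: the existential quantifier now ranges over a countable type.\<close>
lemma Amb_Suc_iff:
  assumes om: "\<omega> \<in> space M"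
  shows "(x, t) \<in> Amb A H \<omega> (Suc n) \<longleftrightarrow>
    (\<exists>x' i y c. y \<in> A i \<and> cand_valid c \<omega> \<and> (x', cand_time c \<omega>) \<in> Amb A H \<omega> n \<and>
       (x - x' - y, i, t - cand_time c \<omega>) \<in> H (shift x' (cand_time c \<omega>) \<omega>))"
proof
  assume "(x, t) \<in> Amb A H \<omega> (Suc n)"
  then obtain x' t' w i u y where a: "(x', t') \<in> Amb A H \<omega> n" "(w, i, u) \<in> H (shift x' t' \<omega>)"
    "y \<in> A i" "(x, t) = (w + x' + y, u + t')" by (rule Amb_Suc_E)
  obtain c where "cand_valid c \<omega>" "cand_time c \<omega> = t'" using Amb_cand_time[OF om a(1)] .
  then show "\<exists>x' i y c. y \<in> A i \<and> cand_valid c \<omega> \<and> (x', cand_time c \<omega>) \<in> Amb A H \<omega> n \<and>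
       (x - x' - y, i, t - cand_time c \<omega>) \<in> H (shift x' (cand_time c \<omega>) \<omega>)"
    using a by (intro exI[of _ x'] exI[of _ i] exI[of _ y] exI[of _ c]) (auto simp: algebra_simps)
next
  assume "\<exists>x' i y c. y \<in> A i \<and> cand_valid c \<omega> \<and> (x', cand_time c \<omega>) \<in> Amb A H \<omega> n \<and>
       (x - x' - y, i, t - cand_time c \<omega>) \<in> H (shift x' (cand_time c \<omega>) \<omega>)"
  then obtain x' i y t' where "y \<in> A i" "(x', t') \<in> Amb A H \<omega> n" "(x - x' - y, i, t - t') \<in> H (shift x' t' \<omega>)"
    by blast
  from Amb_Suc_I[OF this(2,3,1)] show "(x, t) \<in> Amb A H \<omega> (Suc n)" by simp
qed

text \<open>Membership in each \<open>Amb_n\<close> at a measurable space-time point is measurable, by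
  induction on \<open>n\<close> using the countable form of the recursion.\<close>
lemma Amb_measurable:
  "f \<in> measurable N M \<Longrightarrow> g \<in> borel_measurable N \<Longrightarrow> Measurable.pred N (\<lambda>z. (x, g z) \<in> Amb A H (f z) n)"
proof (induction n arbitrary: x f g N)
  case 0
  have "Measurable.pred N (\<lambda>z. x = 0 \<and> g z = 0)" using "0.prems" by measurable
  then show ?case by simp
next
  case (Suc n)
  note [measurable] = Suc.prems
  have [measurable (raw)]: "Measurable.pred N (\<lambda>z. (x', g' z) \<in> Amb A H (f' z) n)"
    if "f' \<in> measurable N M" "g' \<in> borel_measurable N" for x' f' g' using that by (rule Suc.IH)
  have "Measurable.pred N (\<lambda>z. \<exists>x' i y c. y \<in> A i \<and> cand_valid c (f z) \<and>
      (x', cand_time c (f z)) \<in> Amb A H (f z) n \<and>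
      (x - x' - y, i, g z - cand_time c (f z)) \<in> H (shift x' (cand_time c (f z)) (f z)))"
    by measurable
  then show ?case
    by (rule measurable_cong[THEN iffD1, rotated])
      (simp del: Amb.simps add: Amb_Suc_iff measurable_space[OF Suc.prems(1)])
qed

lemma Amb_inf_measurable[measurable (raw)]:
  assumes [measurable]: "f \<in> measurable N M" "g \<in> borel_measurable N"
  shows "Measurable.pred N (\<lambda>z. (x, g z) \<in> Amb_inf A H (f z))"
proof -
  have [measurable]: "Measurable.pred N (\<lambda>z. (x, g z) \<in> Amb A H (f z) n)" for n
    by (rule Amb_measurable) measurable
  have "Measurable.pred N (\<lambda>z. \<exists>n. (x, g z) \<in> Amb A H (f z) n)" by measurable
  then show ?thesis unfolding Amb_inf_def by simp
qed

lemma Amb_inf_cand: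
  assumes "\<omega> \<in> space M"
  shows "Amb_inf A H \<omega> = (\<lambda>(x, c). (x, cand_time c \<omega>)) ` {(x, c). cand_valid c \<omega> \<and> (x, cand_time c \<omega>) \<in> Amb_inf A H \<omega>}"
proof (intro set_eqI iffI)
  fix p assume p: "p \<in> Amb_inf A H \<omega>"
  obtain n where "p \<in> Amb A H \<omega> n" using p unfolding Amb_inf_def by blast
  moreover obtain x t where "p = (x, t)" by (cases p)
  ultimately have xt: "p = (x, t)" "(x, t) \<in> Amb A H \<omega> n" by simp_all
  obtain c where "cand_valid c \<omega>" "cand_time c \<omega> = t" using Amb_cand_time[OF assms xt(2)] .
  then show "p \<in> (\<lambda>(x, c). (x, cand_time c \<omega>)) ` {(x, c). cand_valid c \<omega> \<and> (x, cand_time c \<omega>) \<in> Amb_inf A H \<omega>}"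
    using p xt(1) by (intro rev_image_eqI[of "(x, c)"]) auto
qed auto

text \<open>The infimum defining \<open>T*\<close> is an infimum over a countable family of measurable
  functions.\<close>
lemma Amb_inf_INF_measurable:
  assumes [measurable]: "T \<in> borel_measurable M"
  shows "(\<lambda>\<omega>. INF (x, t)\<in>Amb_inf A H \<omega>. ereal t + T (shift x t \<omega>)) \<in> borel_measurable M"
proof -
  define F where "F j \<omega> = (if cand_valid (snd j) \<omega> \<and> (fst j, cand_time (snd j) \<omega>) \<in> Amb_inf A H \<omega>
     then ereal (cand_time (snd j) \<omega>) + T (shift (fst j) (cand_time (snd j) \<omega>) \<omega>) else top)"
    for j :: "(int ^ 'd) \<times> ((int ^ 'd) \<times> 'i \<times> rat \<times> rat) option" and \<omega>
  have [measurable]: "F j \<in> borel_measurable M" for j unfolding F_def by measurable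
  have "(INF (x, t)\<in>Amb_inf A H \<omega>. ereal t + T (shift x t \<omega>)) = (INF j. F j \<omega>)"
    if "\<omega> \<in> space M" for \<omega>
  proof -
    have "(INF (x, t)\<in>Amb_inf A H \<omega>. ereal t + T (shift x t \<omega>))
        = (INF j\<in>{(x, c). cand_valid c \<omega> \<and> (x, cand_time c \<omega>) \<in> Amb_inf A H \<omega>}.
             (\<lambda>(x, t). ereal t + T (shift x t \<omega>)) ((\<lambda>(x, c). (x, cand_time c \<omega>)) j))"
      by (subst Amb_inf_cand[OF that]) (simp add: image_comp)
    also have "\<dots> = (INF j. F j \<omega>)"
      by (subst INF_extend_top) (auto simp: F_def split_beta intro!: INF_cong)
    finally show ?thesis .
  qed
  moreover have "(\<lambda>\<omega>. INF j. F j \<omega>) \<in> borel_measurable M" by measurable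
  ultimately show ?thesis by (subst measurable_cong) auto
qed

lemma Tstar_measurable:
  assumes "T \<in> borel_measurable M" and E: "{\<omega> \<in> space M. Tstar A T H \<omega> > - \<infinity>} \<in> sets M"
  shows "Tstar A T H \<in> borel_measurable M"
proof -
  let ?E = "{\<omega> \<in> space M. Tstar A T H \<omega> > - \<infinity>}"
  let ?G = "\<lambda>\<omega>. INF (x, t)\<in>Amb_inf A H \<omega>. ereal t + T (shift x t \<omega>)"
  have "Tstar A T H \<omega> = (if \<omega> \<in> ?E then ?G \<omega> else - \<infinity>)" if "\<omega> \<in> space M" for \<omega>
    using that by (auto simp: Tstar_def)
  moreover have "(\<lambda>\<omega>. if \<omega> \<in> ?E then ?G \<omega> else - \<infinity>) \<in> borel_measurable M"
    by (rule measurable_If_set[OF Amb_inf_INF_measurable[OF assms(1)]]) (use E in auto)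
  ultimately show ?thesis by (subst measurable_cong) auto
qed

end

theorem mainTheorem9:
  fixes A :: "'i::finite \<Rightarrow> (int ^ 'd::finite) set"
    and f :: "'i \<Rightarrow> (int ^ 'd \<Rightarrow> 's::finite) \<Rightarrow> 's"
    and r :: "'i \<Rightarrow> real"
    and M :: "('d, 'i) pt set measure"
    and T :: "('d, 'i) pt set \<Rightarrow> ereal"
    and H :: "('d, 'i) pt set \<Rightarrow> ('d, 'i) pt set"
  assumes "\<forall>i. finite (A i)"
    and "\<forall>i. r i \<ge> 0"
    and "poisson_process A r M"
    and "cftp_amb A f M T H"
    and "measure M {\<omega> \<in> space M. Tstar A T H \<omega> > - \<infinity>} = 1"
  shows "cftp_time A f M (Tstar A T H)"
proof -
  interpret prob_space M using assms(3) by (simp add: poisson_process_def)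
  have T_meas: "T \<in> borel_measurable M" and T_neg: "\<forall>\<omega>\<in>space M. T \<omega> < 0"
    and H_sub: "\<forall>\<omega>\<in>space M. H \<omega> \<subseteq> Pt \<omega> (T \<omega>)"
    and res: "\<forall>\<omega>\<in>space M. T \<omega> \<noteq> - \<infinity> \<longrightarrow> resolves A f T H \<omega>"
    using assms(4) unfolding cftp_amb_def resolves_def by auto
  interpret ambiguity_rule A M H T
    using assms(3,4) by unfold_locales (auto simp: poisson_process_def cftp_amb_def)
  \<comment> \<open>an event of probability one is measurable, since non-measurable sets have measure \<open>0\<close>\<close>
  have E: "{\<omega> \<in> space M. Tstar A T H \<omega> > - \<infinity>} \<in> sets M"
    using assms(5) measure_notin_sets by fastforce
  have "AE \<omega> in M. Tstar A T H \<omega> \<noteq> - \<infinity>"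
    using AE_prob_1[OF assms(5)] by eventually_elim auto
  moreover have "\<forall>\<omega>\<in>space M. Tstar A T H \<omega> < 0"
    using Tstar_le_T T_neg by (blast intro: le_less_trans)
  moreover have "Phi_before A f \<omega> (real_of_ereal (Tstar A T H \<omega>)) 0 \<xi>1 0
               = Phi_before A f \<omega> (real_of_ereal (Tstar A T H \<omega>)) 0 \<xi>2 0"
    if "\<omega> \<in> space M" "Tstar A T H \<omega> \<noteq> - \<infinity>" for \<omega> \<xi>1 \<xi>2
    using that T_neg H_sub res shift_space space_M by (intro Tstar_coalescence) auto
  ultimately show ?thesis
    unfolding cftp_time_def using Tstar_measurable[OF T_meas E] by blast
qed

end
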